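(* Let $Q$ be a commutative automorphic loop of nilpotency class $3$. Then for all $a,b,c,d\in Q$: \begin{align*} (ab,c,d)=&(a,c,d)(b,c,d)((a,c,d),a,b)((b,c,d),b,a)\\&\cdot((a,c,d),b,c)((b,c,d),a,c)((a,c,d),b,d)((b,c,d),a,d),\\ (a,b,cd)=&(a,b,c)(a,b,d)((a,b,c),c,d)((a,b,d),d,c)\\&\cdot((a,b,c),d,b)((a,b,d),c,b)((a,b,c),d,a)((a,b,d),c,a),\\ (a,bc,d)=&(a,b,d)(a,c,d)((a,b,d),b,c)((a,c,d),c,b)\\&\cdot((a,b,d),c,a)((a,c,d),b,a)((a,b,d),c,d)((a,c,d),b,d). \end{align*}
   Context: A loop is a set with a binary operation such that all left and right translations $L_a:b\mapsto ab$, $R_a:b\mapsto ba$ are bijections and there is a two-sided identity. The inner mapping group is the stabilizer of the identity in the group generated by all translations; $Q$ is automorphic if all inner mappings are automorphisms. The associator $(a,b,c)$ is defined by $(ab)c=(a(bc))(a,b,c)$; the notation $x\cdot y$ indicates lower priority of multiplication. The center $Z(Q)$ is the set of elements fixed by all inner mappings; $Z_0=1$, $Z_{i+1}(Q)$ is the preimage of $Z(Q/Z_i(Q))$, and $Q$ has nilpotency class $n$ if $Z_{n-1}(Q)\neq Q=Z_n(Q)$. In a commutative loop of nilpotency class $3$, all compounded associators (associators having an associator as one argument) are central. *)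

theory Defs
  imports "HOL-Algebra.Bij" "HOL-Algebra.Generated_Groups"
begin

definition loop :: "('a, 'b) monoid_scheme \<Rightarrow> bool" where
  "loop G \<longleftrightarrow>
     (\<forall>x \<in> carrier G. \<forall>y \<in> carrier G. x \<otimes>\<^bsub>G\<^esub> y \<in> carrier G) \<and>
     \<one>\<^bsub>G\<^esub> \<in> carrier G \<and>
     (\<forall>x \<in> carrier G. \<one>\<^bsub>G\<^esub> \<otimes>\<^bsub>G\<^esub> x = x \<and> x \<otimes>\<^bsub>G\<^esub> \<one>\<^bsub>G\<^esub> = x) \<and>
     (\<forall>a \<in> carrier G. bij_betw (\<lambda>b. a \<otimes>\<^bsub>G\<^esub> b) (carrier G) (carrier G)) \<and>
     (\<forall>a \<in> carrier G. bij_betw (\<lambda>b. b \<otimes>\<^bsub>G\<^esub> a) (carrier G) (carrier G))"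

definition commutative_loop :: "('a, 'b) monoid_scheme \<Rightarrow> bool" where
  "commutative_loop G \<longleftrightarrow> loop G \<and>
     (\<forall>x \<in> carrier G. \<forall>y \<in> carrier G. x \<otimes>\<^bsub>G\<^esub> y = y \<otimes>\<^bsub>G\<^esub> x)"

text \<open>Left and right translations, as elements of the symmetric group on the carrier.\<close>

definition ltrans :: "('a, 'b) monoid_scheme \<Rightarrow> 'a \<Rightarrow> 'a \<Rightarrow> 'a" where
  "ltrans G a = restrict (\<lambda>b. a \<otimes>\<^bsub>G\<^esub> b) (carrier G)"

definition rtrans :: "('a, 'b) monoid_scheme \<Rightarrow> 'a \<Rightarrow> 'a \<Rightarrow> 'a" where
  "rtrans G a = restrict (\<lambda>b. b \<otimes>\<^bsub>G\<^esub> a) (carrier G)"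

definition mlt :: "('a, 'b) monoid_scheme \<Rightarrow> ('a \<Rightarrow> 'a) set" where
  "mlt G = generate (BijGroup (carrier G))
             (ltrans G ` carrier G \<union> rtrans G ` carrier G)"

definition inn :: "('a, 'b) monoid_scheme \<Rightarrow> ('a \<Rightarrow> 'a) set" where
  "inn G = {f \<in> mlt G. f \<one>\<^bsub>G\<^esub> = \<one>\<^bsub>G\<^esub>}"

definition automorphic_loop :: "('a, 'b) monoid_scheme \<Rightarrow> bool" where
  "automorphic_loop G \<longleftrightarrow> loop G \<and>
     (\<forall>f \<in> inn G. \<forall>x \<in> carrier G. \<forall>y \<in> carrier G.
        f (x \<otimes>\<^bsub>G\<^esub> y) = f x \<otimes>\<^bsub>G\<^esub> f y)"

definition loop_center :: "('a, 'b) monoid_scheme \<Rightarrow> 'a set" where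
  "loop_center G = {x \<in> carrier G. \<forall>f \<in> inn G. f x = x}"

text \<open>Quotient loop by a (normal) subloop N: cosets xN, with (xN)(yN) = (xy)N.\<close>

definition lcoset :: "('a, 'b) monoid_scheme \<Rightarrow> 'a \<Rightarrow> 'a set \<Rightarrow> 'a set" where
  "lcoset G x N = (\<lambda>n. x \<otimes>\<^bsub>G\<^esub> n) ` N"

definition quot_loop :: "('a, 'b) monoid_scheme \<Rightarrow> 'a set \<Rightarrow> 'a set monoid" where
  "quot_loop G N =
     \<lparr> carrier = (\<lambda>x. lcoset G x N) ` carrier G,
       mult = (\<lambda>A B. lcoset G ((SOME a. a \<in> A) \<otimes>\<^bsub>G\<^esub> (SOME b. b \<in> B)) N),
       one = N \<rparr>"

fun upper_center :: "('a, 'b) monoid_scheme \<Rightarrow> nat \<Rightarrow> 'a set" where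
  "upper_center G 0 = {\<one>\<^bsub>G\<^esub>}"
| "upper_center G (Suc i) =
     {x \<in> carrier G. lcoset G x (upper_center G i)
                       \<in> loop_center (quot_loop G (upper_center G i))}"

definition nilpotency_class :: "('a, 'b) monoid_scheme \<Rightarrow> nat \<Rightarrow> bool" where
  "nilpotency_class G n \<longleftrightarrow>
     upper_center G n = carrier G \<and> upper_center G (n - 1) \<noteq> carrier G"

text \<open>Associator: (ab)c = (a(bc)) (a,b,c).\<close>

definition associator :: "('a, 'b) monoid_scheme \<Rightarrow> 'a \<Rightarrow> 'a \<Rightarrow> 'a \<Rightarrow> 'a" where
  "associator G a b c =
     the_inv_into (carrier G) (\<lambda>u. (a \<otimes>\<^bsub>G\<^esub> (b \<otimes>\<^bsub>G\<^esub> c)) \<otimes>\<^bsub>G\<^esub> u)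
       ((a \<otimes>\<^bsub>G\<^esub> b) \<otimes>\<^bsub>G\<^esub> c)"

end

theory Submission
  imports Defs
begin

text \<open>In a commutative automorphic loop of nilpotency class 3 every associator lies in the
  second centre \<open>Z\<^sub>2\<close>, so associators with an argument in \<open>Z\<^sub>2\<close> are central. Since the inner
  mappings \<open>L\<^sub>x\<^sub>,\<^sub>y\<close> are automorphisms, such associators are multiplicative in each argument,
  and all associators lie in one abelian group in which they can be rearranged freely.
  The identities then come from a single computation: if an inner mapping \<open>f\<close> satisfies
  \<open>m f(w) = (m w) D(w)\<close> with \<open>D(w)\<close> in that group, expanding \<open>f(xy) = f(x) f(y)\<close> expresses
  \<open>D(xy)\<close> through \<open>D(x)\<close>, \<open>D(y)\<close> and compounded associators. For \<open>f = L\<^sub>d\<^sub>,\<^sub>c\<close> and \<open>m = cd\<close>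
  the defect is \<open>D(w) = (w,c,d)\<close>, which gives the first identity; for \<open>f = L\<^sub>a\<^sub>,\<^sub>b\<close> and
  \<open>m = ab\<close> it is \<open>D(w) = (a,b,w)\<^sup>-\<^sup>1\<close>, which gives the second; the third follows from the first two
  and \<open>(x,y,z) = (x,z,y)(y,x,z)\<close>.\<close>

section \<open>Loops\<close>

locale loop_struct =
  fixes G :: "('a, 'b) monoid_scheme" (structure)
  assumes is_loop: "loop G"
begin

lemma m_closed [simp, intro]: "x \<in> carrier G \<Longrightarrow> y \<in> carrier G \<Longrightarrow> x \<otimes> y \<in> carrier G"
  using is_loop unfolding loop_def by blast

lemma one_closed [simp, intro]: "\<one> \<in> carrier G"
  using is_loop unfolding loop_def by blast

lemma l_one [simp]: "x \<in> carrier G \<Longrightarrow> \<one> \<otimes> x = x"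
  using is_loop unfolding loop_def by blast

lemma r_one [simp]: "x \<in> carrier G \<Longrightarrow> x \<otimes> \<one> = x"
  using is_loop unfolding loop_def by blast

lemma bij_betw_mult_left: "a \<in> carrier G \<Longrightarrow> bij_betw (\<lambda>b. a \<otimes> b) (carrier G) (carrier G)"
  using is_loop unfolding loop_def by blast

lemma bij_betw_mult_right: "a \<in> carrier G \<Longrightarrow> bij_betw (\<lambda>b. b \<otimes> a) (carrier G) (carrier G)"
  using is_loop unfolding loop_def by (elim conjE) blast

lemma l_cancel:
  "\<lbrakk>a \<in> carrier G; x \<in> carrier G; y \<in> carrier G; a \<otimes> x = a \<otimes> y\<rbrakk> \<Longrightarrow> x = y"
  using bij_betw_mult_left[of a] unfolding bij_betw_def by (auto dest: inj_onD)

lemma r_cancel: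
  "\<lbrakk>a \<in> carrier G; x \<in> carrier G; y \<in> carrier G; x \<otimes> a = y \<otimes> a\<rbrakk> \<Longrightarrow> x = y"
  using bij_betw_mult_right[of a] unfolding bij_betw_def by (auto dest: inj_onD)

definition ldiv :: "'a \<Rightarrow> 'a \<Rightarrow> 'a"
  where "ldiv a y = the_inv_into (carrier G) (\<lambda>u. a \<otimes> u) y"

definition rdiv :: "'a \<Rightarrow> 'a \<Rightarrow> 'a"
  where "rdiv y a = the_inv_into (carrier G) (\<lambda>u. u \<otimes> a) y"

lemma ldiv_closed [simp, intro]: "a \<in> carrier G \<Longrightarrow> y \<in> carrier G \<Longrightarrow> ldiv a y \<in> carrier G"
  and mult_ldiv [simp]: "a \<in> carrier G \<Longrightarrow> y \<in> carrier G \<Longrightarrow> a \<otimes> ldiv a y = y"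
  using bij_betw_mult_left[of a] unfolding ldiv_def bij_betw_def
  by (auto intro: the_inv_into_into f_the_inv_into_f)

lemma ldiv_unique: "a \<in> carrier G \<Longrightarrow> u \<in> carrier G \<Longrightarrow> a \<otimes> u = y \<Longrightarrow> ldiv a y = u"
  using l_cancel[of a "ldiv a y" u] by auto

lemma rdiv_closed [simp, intro]: "a \<in> carrier G \<Longrightarrow> y \<in> carrier G \<Longrightarrow> rdiv y a \<in> carrier G"
  and rdiv_mult [simp]: "a \<in> carrier G \<Longrightarrow> y \<in> carrier G \<Longrightarrow> rdiv y a \<otimes> a = y"
  using bij_betw_mult_right[of a] unfolding rdiv_def bij_betw_def
  by (auto intro: the_inv_into_into f_the_inv_into_f)

lemma rdiv_unique: "a \<in> carrier G \<Longrightarrow> u \<in> carrier G \<Longrightarrow> u \<otimes> a = y \<Longrightarrow> rdiv y a = u"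
  using r_cancel[of a "rdiv y a" u] by auto

lemma associator_eq_ldiv: "associator G a b c = ldiv (a \<otimes> (b \<otimes> c)) ((a \<otimes> b) \<otimes> c)"
  unfolding associator_def ldiv_def by simp

lemma associator_closed [simp, intro]:
  "a \<in> carrier G \<Longrightarrow> b \<in> carrier G \<Longrightarrow> c \<in> carrier G \<Longrightarrow> associator G a b c \<in> carrier G"
  by (simp add: associator_eq_ldiv)

lemma associator_law:
  "a \<in> carrier G \<Longrightarrow> b \<in> carrier G \<Longrightarrow> c \<in> carrier G \<Longrightarrow>
    (a \<otimes> (b \<otimes> c)) \<otimes> associator G a b c = (a \<otimes> b) \<otimes> c"
  by (simp add: associator_eq_ldiv)

lemma associator_unique:
  "\<lbrakk>a \<in> carrier G; b \<in> carrier G; c \<in> carrier G; u \<in> carrier G;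
    (a \<otimes> (b \<otimes> c)) \<otimes> u = (a \<otimes> b) \<otimes> c\<rbrakk> \<Longrightarrow> associator G a b c = u"
  by (simp add: associator_eq_ldiv ldiv_unique)

lemma associator_eq_one_iff:
  "a \<in> carrier G \<Longrightarrow> b \<in> carrier G \<Longrightarrow> c \<in> carrier G \<Longrightarrow>
    associator G a b c = \<one> \<longleftrightarrow> (a \<otimes> b) \<otimes> c = a \<otimes> (b \<otimes> c)"
  using associator_law[of a b c] associator_unique[of a b c \<one>] by auto

abbreviation Perm :: "('a \<Rightarrow> 'a) monoid"
  where "Perm \<equiv> BijGroup (carrier G)"

lemma ltrans_Bij: "a \<in> carrier G \<Longrightarrow> ltrans G a \<in> Bij (carrier G)"
  using bij_betw_mult_left[of a] unfolding ltrans_def Bij_def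
  by (auto simp: bij_betw_def inj_on_def)

lemma rtrans_Bij: "a \<in> carrier G \<Longrightarrow> rtrans G a \<in> Bij (carrier G)"
  using bij_betw_mult_right[of a] unfolding rtrans_def Bij_def
  by (auto simp: bij_betw_def inj_on_def)

lemma carrier_Perm: "carrier Perm = Bij (carrier G)"
  by (simp add: BijGroup_def)

lemma mlt_Bij: "f \<in> mlt G \<Longrightarrow> f \<in> Bij (carrier G)"
proof -
  have "ltrans G ` carrier G \<union> rtrans G ` carrier G \<subseteq> carrier Perm"
    using ltrans_Bij rtrans_Bij by (auto simp only: carrier_Perm)
  from group.generate_in_carrier[OF group_BijGroup this]
  show "f \<in> mlt G \<Longrightarrow> f \<in> Bij (carrier G)" unfolding mlt_def carrier_Perm .
qed

lemma mlt_closed: "f \<in> mlt G \<Longrightarrow> x \<in> carrier G \<Longrightarrow> f x \<in> carrier G"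
  using mlt_Bij Bij_imp_funcset by blast

lemma inn_closed: "f \<in> inn G \<Longrightarrow> x \<in> carrier G \<Longrightarrow> f x \<in> carrier G"
  using mlt_closed unfolding inn_def by blast

lemma ltrans_mlt: "a \<in> carrier G \<Longrightarrow> ltrans G a \<in> mlt G"
  and rtrans_mlt: "a \<in> carrier G \<Longrightarrow> rtrans G a \<in> mlt G"
  and inv_ltrans_mlt: "a \<in> carrier G \<Longrightarrow> inv\<^bsub>Perm\<^esub> (ltrans G a) \<in> mlt G"
  and inv_rtrans_mlt: "a \<in> carrier G \<Longrightarrow> inv\<^bsub>Perm\<^esub> (rtrans G a) \<in> mlt G"
  unfolding mlt_def by (auto intro: generate.incl generate.inv)

lemma compose_mlt: "f \<in> mlt G \<Longrightarrow> g \<in> mlt G \<Longrightarrow> compose (carrier G) f g \<in> mlt G"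
proof -
  assume f: "f \<in> mlt G" and g: "g \<in> mlt G"
  then have "f \<otimes>\<^bsub>Perm\<^esub> g \<in> mlt G" unfolding mlt_def by (rule generate.eng)
  then show ?thesis using mlt_Bij[OF f] mlt_Bij[OF g] by (simp add: BijGroup_def)
qed

lemma inv_ltrans_apply:
  assumes "a \<in> carrier G" "y \<in> carrier G"
  shows "(inv\<^bsub>Perm\<^esub> (ltrans G a)) y = ldiv a y"
proof -
  have "inv_into (carrier G) (ltrans G a) y = ldiv a y"
    using ltrans_Bij[of a] assms
    by (intro inv_into_f_eq) (auto simp: Bij_def bij_betw_def ltrans_def)
  then show ?thesis using inv_BijGroup[OF ltrans_Bij] assms by simp
qed

lemma inv_rtrans_apply:
  assumes "a \<in> carrier G" "y \<in> carrier G"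
  shows "(inv\<^bsub>Perm\<^esub> (rtrans G a)) y = rdiv y a"
proof -
  have "inv_into (carrier G) (rtrans G a) y = rdiv y a"
    using rtrans_Bij[of a] assms
    by (intro inv_into_f_eq) (auto simp: Bij_def bij_betw_def rtrans_def)
  then show ?thesis using inv_BijGroup[OF rtrans_Bij] assms by simp
qed

lemma left_inner_map_inn:
  assumes x: "x \<in> carrier G" and y: "y \<in> carrier G"
  obtains f where "f \<in> inn G" "\<And>u. u \<in> carrier G \<Longrightarrow> f u = ldiv (x \<otimes> y) (x \<otimes> (y \<otimes> u))"
proof
  let ?f = "compose (carrier G) (inv\<^bsub>Perm\<^esub> (ltrans G (x \<otimes> y)))
              (compose (carrier G) (ltrans G x) (ltrans G y))"
  show f: "?f u = ldiv (x \<otimes> y) (x \<otimes> (y \<otimes> u))" if "u \<in> carrier G" for u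
    using x y that by (simp add: compose_def ltrans_def[of G x] ltrans_def[of G y] inv_ltrans_apply)
  have "?f \<in> mlt G" using x y by (intro compose_mlt inv_ltrans_mlt ltrans_mlt) auto
  moreover have "?f \<one> = \<one>" using f[of \<one>] x y by (auto intro: ldiv_unique)
  ultimately show "?f \<in> inn G" unfolding inn_def by blast
qed

lemma right_inner_map_inn:
  assumes x: "x \<in> carrier G" and y: "y \<in> carrier G"
  obtains f where "f \<in> inn G" "\<And>u. u \<in> carrier G \<Longrightarrow> f u = rdiv ((u \<otimes> x) \<otimes> y) (x \<otimes> y)"
proof
  let ?f = "compose (carrier G) (inv\<^bsub>Perm\<^esub> (rtrans G (x \<otimes> y)))
              (compose (carrier G) (rtrans G y) (rtrans G x))"
  show f: "?f u = rdiv ((u \<otimes> x) \<otimes> y) (x \<otimes> y)" if "u \<in> carrier G" for u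
    using x y that by (simp add: compose_def rtrans_def[of G x] rtrans_def[of G y] inv_rtrans_apply)
  have "?f \<in> mlt G" using x y by (intro compose_mlt inv_rtrans_mlt rtrans_mlt) auto
  moreover have "?f \<one> = \<one>" using f[of \<one>] x y by (auto intro: rdiv_unique)
  ultimately show "?f \<in> inn G" unfolding inn_def by blast
qed

lemma middle_inner_map_inn:
  assumes x: "x \<in> carrier G"
  obtains f where "f \<in> inn G" "\<And>u. u \<in> carrier G \<Longrightarrow> f u = rdiv (x \<otimes> u) x"
proof
  let ?f = "compose (carrier G) (inv\<^bsub>Perm\<^esub> (rtrans G x)) (ltrans G x)"
  show f: "?f u = rdiv (x \<otimes> u) x" if "u \<in> carrier G" for u
    using x that by (simp add: compose_def ltrans_def[of G x] inv_rtrans_apply)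
  have "?f \<in> mlt G" using x by (intro compose_mlt inv_rtrans_mlt ltrans_mlt) auto
  moreover have "?f \<one> = \<one>" using f[of \<one>] x by (auto intro: rdiv_unique)
  ultimately show "?f \<in> inn G" unfolding inn_def by blast
qed

subsection \<open>The centre\<close>

definition comm_nucleus :: "'a set"
  where "comm_nucleus = {z \<in> carrier G. \<forall>a \<in> carrier G. \<forall>b \<in> carrier G.
     a \<otimes> z = z \<otimes> a \<and> (a \<otimes> b) \<otimes> z = a \<otimes> (b \<otimes> z) \<and>
     (z \<otimes> a) \<otimes> b = z \<otimes> (a \<otimes> b) \<and> (a \<otimes> z) \<otimes> b = a \<otimes> (z \<otimes> b)}"

lemma comm_nucleus_closed [simp, intro]: "z \<in> comm_nucleus \<Longrightarrow> z \<in> carrier G"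
  and comm_nucleus_comm: "z \<in> comm_nucleus \<Longrightarrow> a \<in> carrier G \<Longrightarrow> a \<otimes> z = z \<otimes> a"
  and comm_nucleus_assoc_right:
    "z \<in> comm_nucleus \<Longrightarrow> a \<in> carrier G \<Longrightarrow> b \<in> carrier G \<Longrightarrow> (a \<otimes> b) \<otimes> z = a \<otimes> (b \<otimes> z)"
  and comm_nucleus_assoc_left:
    "z \<in> comm_nucleus \<Longrightarrow> a \<in> carrier G \<Longrightarrow> b \<in> carrier G \<Longrightarrow> (z \<otimes> a) \<otimes> b = z \<otimes> (a \<otimes> b)"
  and comm_nucleus_assoc_mid:
    "z \<in> comm_nucleus \<Longrightarrow> a \<in> carrier G \<Longrightarrow> b \<in> carrier G \<Longrightarrow> (a \<otimes> z) \<otimes> b = a \<otimes> (z \<otimes> b)"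
  unfolding comm_nucleus_def by blast+

lemma comm_nucleus_swap:
  "z \<in> comm_nucleus \<Longrightarrow> p \<in> carrier G \<Longrightarrow> q \<in> carrier G \<Longrightarrow> (p \<otimes> z) \<otimes> q = (p \<otimes> q) \<otimes> z"
  using comm_nucleus_assoc_mid[of z p q] comm_nucleus_comm[of z q] comm_nucleus_assoc_right[of z p q]
  by simp

lemma loop_center_subset_comm_nucleus: "loop_center G \<subseteq> comm_nucleus"
proof
  fix z assume "z \<in> loop_center G"
  then have z: "z \<in> carrier G" and fixed: "\<And>f. f \<in> inn G \<Longrightarrow> f z = z"
    unfolding loop_center_def by auto
  have comm: "a \<otimes> z = z \<otimes> a" if a: "a \<in> carrier G" for a
  proof -
    obtain f where "f \<in> inn G" "\<And>u. u \<in> carrier G \<Longrightarrow> f u = rdiv (a \<otimes> u) a"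
      using middle_inner_map_inn[OF a] by blast
    then have "rdiv (a \<otimes> z) a = z" using fixed z by metis
    then show ?thesis using rdiv_mult[of a "a \<otimes> z"] a z by simp
  qed
  have right: "(a \<otimes> b) \<otimes> z = a \<otimes> (b \<otimes> z)" if a: "a \<in> carrier G" and b: "b \<in> carrier G" for a b
  proof -
    obtain f where "f \<in> inn G" "\<And>u. u \<in> carrier G \<Longrightarrow> f u = ldiv (a \<otimes> b) (a \<otimes> (b \<otimes> u))"
      using left_inner_map_inn[OF a b] by blast
    then have "ldiv (a \<otimes> b) (a \<otimes> (b \<otimes> z)) = z" using fixed z by metis
    then show ?thesis using mult_ldiv[of "a \<otimes> b" "a \<otimes> (b \<otimes> z)"] a b z by simp
  qed
  have left: "(z \<otimes> a) \<otimes> b = z \<otimes> (a \<otimes> b)" if a: "a \<in> carrier G" and b: "b \<in> carrier G" for a b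
  proof -
    obtain f where "f \<in> inn G" "\<And>u. u \<in> carrier G \<Longrightarrow> f u = rdiv ((u \<otimes> a) \<otimes> b) (a \<otimes> b)"
      using right_inner_map_inn[OF a b] by blast
    then have "rdiv ((z \<otimes> a) \<otimes> b) (a \<otimes> b) = z" using fixed z by metis
    then show ?thesis using rdiv_mult[of "a \<otimes> b" "(z \<otimes> a) \<otimes> b"] a b z by simp
  qed
  have mid: "(a \<otimes> z) \<otimes> b = a \<otimes> (z \<otimes> b)" if a: "a \<in> carrier G" and b: "b \<in> carrier G" for a b
  proof -
    have "(a \<otimes> z) \<otimes> b = z \<otimes> (a \<otimes> b)" using comm[OF a] left[OF a b] by simp
    also have "\<dots> = (a \<otimes> b) \<otimes> z" using comm[of "a \<otimes> b"] a b by simp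
    also have "\<dots> = a \<otimes> (z \<otimes> b)" using right[OF a b] comm[OF b] by simp
    finally show ?thesis .
  qed
  show "z \<in> comm_nucleus"
    unfolding comm_nucleus_def using z comm right left mid by (intro CollectI conjI ballI)
qed

lemma translation_commutes_with_comm_nucleus:
  assumes z: "z \<in> comm_nucleus" and y: "y \<in> carrier G"
    and h: "h \<in> ltrans G ` carrier G \<union> rtrans G ` carrier G"
  shows "h (y \<otimes> z) = h y \<otimes> z" and "(inv\<^bsub>Perm\<^esub> h) (y \<otimes> z) = (inv\<^bsub>Perm\<^esub> h) y \<otimes> z"
proof -
  have zc: "z \<in> carrier G" using z ..
  from h obtain a where a: "a \<in> carrier G" and "h = ltrans G a \<or> h = rtrans G a" by blast
  then consider "h = ltrans G a" | "h = rtrans G a" by blast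
  then have "h (y \<otimes> z) = h y \<otimes> z \<and> (inv\<^bsub>Perm\<^esub> h) (y \<otimes> z) = (inv\<^bsub>Perm\<^esub> h) y \<otimes> z"
  proof cases
    case 1
    have "ldiv a (y \<otimes> z) = ldiv a y \<otimes> z"
      using a y zc comm_nucleus_assoc_right[OF z a, of "ldiv a y"] by (intro ldiv_unique) auto
    then show ?thesis
      using 1 a y zc comm_nucleus_assoc_right[OF z a y] by (simp add: inv_ltrans_apply, simp add: ltrans_def)
  next
    case 2
    have slide: "(u \<otimes> z) \<otimes> a = (u \<otimes> a) \<otimes> z" if "u \<in> carrier G" for u
      using comm_nucleus_swap[OF z that a] .
    have "rdiv (y \<otimes> z) a = rdiv y a \<otimes> z"
      using a y zc slide[of "rdiv y a"] by (intro rdiv_unique) auto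
    then show ?thesis using 2 a y zc slide[OF y] by (simp add: inv_rtrans_apply, simp add: rtrans_def)
  qed
  then show "h (y \<otimes> z) = h y \<otimes> z" and "(inv\<^bsub>Perm\<^esub> h) (y \<otimes> z) = (inv\<^bsub>Perm\<^esub> h) y \<otimes> z"
    by auto
qed

lemma mlt_commutes_with_comm_nucleus:
  assumes z: "z \<in> comm_nucleus" and g: "g \<in> mlt G" and y: "y \<in> carrier G"
  shows "g (y \<otimes> z) = g y \<otimes> z"
  using g[unfolded mlt_def] y
proof (induction arbitrary: y rule: generate.induct)
  case one
  then show ?case using z by (auto simp: BijGroup_def)
next
  case (incl h)
  then show ?case using translation_commutes_with_comm_nucleus(1)[OF z] by blast
next
  case (inv h)
  then show ?case using translation_commutes_with_comm_nucleus(2)[OF z] by blast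
next
  case (eng h1 h2)
  have "h1 \<in> Bij (carrier G)" "h2 \<in> Bij (carrier G)"
    using eng.hyps mlt_Bij unfolding mlt_def by auto
  moreover have "h2 y \<in> carrier G" using eng.hyps(2) eng.prems mlt_closed unfolding mlt_def by blast
  ultimately show ?case
    using eng.IH eng.prems z by (auto simp: BijGroup_def compose_def)
qed

lemma comm_nucleus_subset_loop_center: "comm_nucleus \<subseteq> loop_center G"
proof
  fix z assume z: "z \<in> comm_nucleus"
  have "f z = z" if "f \<in> inn G" for f
  proof -
    have "f \<in> mlt G" "f \<one> = \<one>" using that unfolding inn_def by auto
    then show ?thesis
      using mlt_commutes_with_comm_nucleus[OF z, of f \<one>] comm_nucleus_closed[OF z] by simp
  qed
  then show "z \<in> loop_center G" unfolding loop_center_def using z by blast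
qed

lemma loop_center_eq_comm_nucleus: "loop_center G = comm_nucleus"
  using loop_center_subset_comm_nucleus comm_nucleus_subset_loop_center by blast

lemma one_comm_nucleus [simp, intro]: "\<one> \<in> comm_nucleus"
  unfolding comm_nucleus_def by simp

lemma inn_fixes_comm_nucleus: "z \<in> comm_nucleus \<Longrightarrow> f \<in> inn G \<Longrightarrow> f z = z"
  using comm_nucleus_subset_loop_center unfolding loop_center_def by blast

lemma comm_nucleus_mult [intro]:
  assumes z: "z \<in> comm_nucleus" and w: "w \<in> comm_nucleus"
  shows "z \<otimes> w \<in> comm_nucleus"
proof -
  have "f (z \<otimes> w) = z \<otimes> w" if f: "f \<in> inn G" for f
    using mlt_commutes_with_comm_nucleus[OF w, of f z] inn_fixes_comm_nucleus[OF z f] f z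
    unfolding inn_def by auto
  then show ?thesis
    using z w loop_center_eq_comm_nucleus unfolding loop_center_def by auto
qed

lemma comm_nucleus_inverse:
  assumes z: "z \<in> comm_nucleus" and w: "w \<in> carrier G" and zw: "z \<otimes> w = \<one>"
  shows "w \<in> comm_nucleus"
proof -
  have "f w = w" if f: "f \<in> inn G" for f
  proof -
    have "w \<otimes> z = \<one>" using comm_nucleus_comm[OF z w] zw by simp
    moreover have "f (w \<otimes> z) = f w \<otimes> z"
      using mlt_commutes_with_comm_nucleus[OF z _ w] f unfolding inn_def by blast
    ultimately have "f w \<otimes> z = w \<otimes> z" using f unfolding inn_def by simp
    then show ?thesis using r_cancel z w inn_closed[OF f w] by blast
  qed
  then show ?thesis
    using w loop_center_eq_comm_nucleus unfolding loop_center_def by auto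
qed

lemma comm_nucleus_ldiv_one [intro]: "z \<in> comm_nucleus \<Longrightarrow> ldiv z \<one> \<in> comm_nucleus"
  by (rule comm_nucleus_inverse) auto

lemma mult_mult_comm_nucleus:
  assumes x: "x \<in> carrier G" and y: "y \<in> carrier G"
    and n: "n \<in> comm_nucleus" and m: "m \<in> comm_nucleus"
  shows "(x \<otimes> n) \<otimes> (y \<otimes> m) = (x \<otimes> y) \<otimes> (n \<otimes> m)"
proof -
  have "(x \<otimes> n) \<otimes> (y \<otimes> m) = ((x \<otimes> n) \<otimes> y) \<otimes> m"
    using comm_nucleus_assoc_right[OF m, of "x \<otimes> n" y] x y n by auto
  also have "(x \<otimes> n) \<otimes> y = (x \<otimes> y) \<otimes> n" using comm_nucleus_swap[OF n x y] .
  also have "((x \<otimes> y) \<otimes> n) \<otimes> m = (x \<otimes> y) \<otimes> (n \<otimes> m)"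
    using comm_nucleus_assoc_right[OF m, of "x \<otimes> y" n] x y n by auto
  finally show ?thesis .
qed

lemma l_cancel_comm_nucleus:
  assumes "x \<in> carrier G" "y \<in> carrier G" "y' \<in> carrier G" "k \<in> comm_nucleus"
    and "x \<otimes> y = (x \<otimes> y') \<otimes> k"
  shows "y = y' \<otimes> k"
  using assms l_cancel[of x y "y' \<otimes> k"] comm_nucleus_assoc_right[of k x y'] by auto

lemma r_cancel_comm_nucleus:
  assumes "x \<in> carrier G" "y \<in> carrier G" "y' \<in> carrier G" "k \<in> comm_nucleus"
    and "y \<otimes> x = (y' \<otimes> x) \<otimes> k"
  shows "y = y' \<otimes> k"
  using assms r_cancel[of x y "y' \<otimes> k"] comm_nucleus_swap[of k y' x] by auto

lemma associator_comm_nucleus_left: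
    "z \<in> comm_nucleus \<Longrightarrow> p \<in> carrier G \<Longrightarrow> q \<in> carrier G \<Longrightarrow> associator G z p q = \<one>"
  and associator_comm_nucleus_mid:
    "z \<in> comm_nucleus \<Longrightarrow> p \<in> carrier G \<Longrightarrow> q \<in> carrier G \<Longrightarrow> associator G p z q = \<one>"
  and associator_comm_nucleus_right:
    "z \<in> comm_nucleus \<Longrightarrow> p \<in> carrier G \<Longrightarrow> q \<in> carrier G \<Longrightarrow> associator G p q z = \<one>"
  by (simp_all add: comm_nucleus_closed associator_eq_one_iff comm_nucleus_assoc_left
      comm_nucleus_assoc_mid comm_nucleus_assoc_right)

end

section \<open>Quotient loops and the upper central series\<close>

text \<open>Conditions on \<open>N\<close> under which the cosets \<open>xN\<close> form a loop with \<open>(xN)(yN) = (xy)N\<close>.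
  By \<open>subloop_quotient_center_preimage\<close> they pass from one term of the upper central series
  to the next.\<close>

locale subloop_quotient = loop_struct +
  fixes N :: "'a set"
  assumes sub_carrier: "N \<subseteq> carrier G"
    and one_sub: "\<one> \<in> N"
    and mult_sub_sub: "\<lbrakk>x \<in> carrier G; n \<in> N; m \<in> N\<rbrakk> \<Longrightarrow> \<exists>k\<in>N. (x \<otimes> n) \<otimes> m = x \<otimes> k"
    and mult_sub_inverse: "\<lbrakk>x \<in> carrier G; n \<in> N\<rbrakk> \<Longrightarrow> \<exists>k\<in>N. x = (x \<otimes> n) \<otimes> k"
    and coset_mult:
      "\<lbrakk>x \<in> carrier G; y \<in> carrier G; n \<in> N; m \<in> N\<rbrakk> \<Longrightarrow> \<exists>k\<in>N. (x \<otimes> n) \<otimes> (y \<otimes> m) = (x \<otimes> y) \<otimes> k"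
    and coset_l_cancel: "\<lbrakk>x \<in> carrier G; y \<in> carrier G; y' \<in> carrier G; k \<in> N;
      x \<otimes> y = (x \<otimes> y') \<otimes> k\<rbrakk> \<Longrightarrow> \<exists>k'\<in>N. y = y' \<otimes> k'"
    and coset_r_cancel: "\<lbrakk>x \<in> carrier G; y \<in> carrier G; y' \<in> carrier G; k \<in> N;
      y \<otimes> x = (y' \<otimes> x) \<otimes> k\<rbrakk> \<Longrightarrow> \<exists>k'\<in>N. y = y' \<otimes> k'"
begin

abbreviation coset :: "'a \<Rightarrow> 'a set"
  where "coset x \<equiv> lcoset G x N"

abbreviation quotient :: "'a set monoid"
  where "quotient \<equiv> quot_loop G N"

lemma sub_closed [simp]: "n \<in> N \<Longrightarrow> n \<in> carrier G"
  using sub_carrier by blast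

lemma mem_coset: "u \<in> coset x \<longleftrightarrow> (\<exists>n\<in>N. u = x \<otimes> n)"
  unfolding lcoset_def by blast

lemma self_mem_coset: "x \<in> carrier G \<Longrightarrow> x \<in> coset x"
  unfolding mem_coset using one_sub by force

lemma coset_eq_iff:
  assumes x: "x \<in> carrier G" and y: "y \<in> carrier G"
  shows "coset x = coset y \<longleftrightarrow> (\<exists>n\<in>N. y = x \<otimes> n)"
proof
  assume "coset x = coset y"
  then have "y \<in> coset x" using self_mem_coset[OF y] by simp
  then show "\<exists>n\<in>N. y = x \<otimes> n" unfolding mem_coset .
next
  assume "\<exists>n\<in>N. y = x \<otimes> n"
  then obtain n where n: "n \<in> N" "y = x \<otimes> n" by blast
  show "coset x = coset y"
  proof
    show "coset y \<subseteq> coset x"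
      using mult_sub_sub[OF x n(1)] n(2) by (fastforce simp: mem_coset)
    obtain k where k: "k \<in> N" "x = (x \<otimes> n) \<otimes> k" using mult_sub_inverse[OF x n(1)] by blast
    show "coset x \<subseteq> coset y"
    proof
      fix u assume "u \<in> coset x"
      then obtain m where m: "m \<in> N" "u = ((x \<otimes> n) \<otimes> k) \<otimes> m"
        using k unfolding mem_coset by auto
      then show "u \<in> coset y"
        using mult_sub_sub[OF y k(1) m(1)] n(2) unfolding mem_coset by auto
    qed
  qed
qed

lemma quotient_carrier: "carrier quotient = coset ` carrier G"
  by (simp add: quot_loop_def)

lemma quotient_one: "\<one>\<^bsub>quotient\<^esub> = coset \<one>"
proof -
  have "coset \<one> = N" unfolding lcoset_def by force
  then show ?thesis by (simp add: quot_loop_def)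
qed

lemma quotient_mult:
  assumes x: "x \<in> carrier G" and y: "y \<in> carrier G"
  shows "coset x \<otimes>\<^bsub>quotient\<^esub> coset y = coset (x \<otimes> y)"
proof -
  have "(SOME a. a \<in> coset x) \<in> coset x" using self_mem_coset[OF x] by (rule someI)
  then obtain n where n: "n \<in> N" "(SOME a. a \<in> coset x) = x \<otimes> n" unfolding mem_coset by blast
  have "(SOME b. b \<in> coset y) \<in> coset y" using self_mem_coset[OF y] by (rule someI)
  then obtain m where m: "m \<in> N" "(SOME b. b \<in> coset y) = y \<otimes> m" unfolding mem_coset by blast
  obtain k where "k \<in> N" "(x \<otimes> n) \<otimes> (y \<otimes> m) = (x \<otimes> y) \<otimes> k"
    using coset_mult[OF x y n(1) m(1)] by blast
  then have "coset (x \<otimes> y) = coset ((x \<otimes> n) \<otimes> (y \<otimes> m))"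
    using coset_eq_iff x y n m by auto
  then show ?thesis using n m by (simp add: quot_loop_def)
qed

lemma loop_quotient: "loop quotient"
  unfolding loop_def
proof (intro conjI ballI)
  fix X Y assume "X \<in> carrier quotient" "Y \<in> carrier quotient"
  then show "X \<otimes>\<^bsub>quotient\<^esub> Y \<in> carrier quotient"
    by (auto simp: quotient_carrier quotient_mult)
next
  show "\<one>\<^bsub>quotient\<^esub> \<in> carrier quotient" by (simp add: quotient_one quotient_carrier)
next
  fix X assume "X \<in> carrier quotient"
  then obtain x where x: "x \<in> carrier G" "X = coset x" unfolding quotient_carrier by blast
  show "\<one>\<^bsub>quotient\<^esub> \<otimes>\<^bsub>quotient\<^esub> X = X" "X \<otimes>\<^bsub>quotient\<^esub> \<one>\<^bsub>quotient\<^esub> = X"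
    using x by (simp_all add: quotient_one quotient_mult)
  show "bij_betw (\<lambda>B. X \<otimes>\<^bsub>quotient\<^esub> B) (carrier quotient) (carrier quotient)"
  proof (rule bij_betwI')
    fix Y Y' assume "Y \<in> carrier quotient" "Y' \<in> carrier quotient"
    then obtain y y' where y: "y \<in> carrier G" "Y = coset y" and y': "y' \<in> carrier G" "Y' = coset y'"
      unfolding quotient_carrier by blast
    show "X \<otimes>\<^bsub>quotient\<^esub> Y = X \<otimes>\<^bsub>quotient\<^esub> Y' \<longleftrightarrow> Y = Y'"
    proof
      assume "X \<otimes>\<^bsub>quotient\<^esub> Y = X \<otimes>\<^bsub>quotient\<^esub> Y'"
      then obtain n where "n \<in> N" "x \<otimes> y' = (x \<otimes> y) \<otimes> n"
        using x y y' coset_eq_iff[of "x \<otimes> y" "x \<otimes> y'"] by (auto simp: quotient_mult)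
      then show "Y = Y'" using coset_l_cancel[OF x(1) y'(1) y(1)] y y' coset_eq_iff by metis
    qed simp
  next
    fix Y assume "Y \<in> carrier quotient"
    then show "X \<otimes>\<^bsub>quotient\<^esub> Y \<in> carrier quotient" using x by (auto simp: quotient_carrier quotient_mult)
  next
    fix W assume "W \<in> carrier quotient"
    then obtain w where w: "w \<in> carrier G" "W = coset w" unfolding quotient_carrier by blast
    then have "W = X \<otimes>\<^bsub>quotient\<^esub> coset (ldiv x w)" using x by (simp add: quotient_mult)
    then show "\<exists>Y\<in>carrier quotient. W = X \<otimes>\<^bsub>quotient\<^esub> Y" using x w by (auto simp: quotient_carrier)
  qed
  show "bij_betw (\<lambda>B. B \<otimes>\<^bsub>quotient\<^esub> X) (carrier quotient) (carrier quotient)"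
  proof (rule bij_betwI')
    fix Y Y' assume "Y \<in> carrier quotient" "Y' \<in> carrier quotient"
    then obtain y y' where y: "y \<in> carrier G" "Y = coset y" and y': "y' \<in> carrier G" "Y' = coset y'"
      unfolding quotient_carrier by blast
    show "Y \<otimes>\<^bsub>quotient\<^esub> X = Y' \<otimes>\<^bsub>quotient\<^esub> X \<longleftrightarrow> Y = Y'"
    proof
      assume "Y \<otimes>\<^bsub>quotient\<^esub> X = Y' \<otimes>\<^bsub>quotient\<^esub> X"
      then obtain n where "n \<in> N" "y' \<otimes> x = (y \<otimes> x) \<otimes> n"
        using x y y' coset_eq_iff[of "y \<otimes> x" "y' \<otimes> x"] by (auto simp: quotient_mult)
      then show "Y = Y'" using coset_r_cancel[OF x(1) y'(1) y(1)] y y' coset_eq_iff by metis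
    qed simp
  next
    fix Y assume "Y \<in> carrier quotient"
    then show "Y \<otimes>\<^bsub>quotient\<^esub> X \<in> carrier quotient" using x by (auto simp: quotient_carrier quotient_mult)
  next
    fix W assume "W \<in> carrier quotient"
    then obtain w where w: "w \<in> carrier G" "W = coset w" unfolding quotient_carrier by blast
    then have "W = coset (rdiv w x) \<otimes>\<^bsub>quotient\<^esub> X" using x by (simp add: quotient_mult)
    then show "\<exists>Y\<in>carrier quotient. W = Y \<otimes>\<^bsub>quotient\<^esub> X" using x w by (auto simp: quotient_carrier)
  qed
qed

sublocale Q: loop_struct quotient
  by (rule loop_struct.intro, rule loop_quotient)

definition center_preimage :: "'a set"
  where "center_preimage = {x \<in> carrier G. coset x \<in> loop_center quotient}"

lemma coset_associator_iff:
  assumes a: "a \<in> carrier G" and b: "b \<in> carrier G" and c: "c \<in> carrier G"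
  shows "coset ((a \<otimes> b) \<otimes> c) = coset (a \<otimes> (b \<otimes> c)) \<longleftrightarrow> associator G a b c \<in> N"
proof -
  have "coset ((a \<otimes> b) \<otimes> c) = coset (a \<otimes> (b \<otimes> c)) \<longleftrightarrow>
      (\<exists>n\<in>N. (a \<otimes> b) \<otimes> c = (a \<otimes> (b \<otimes> c)) \<otimes> n)"
    using a b c coset_eq_iff[of "a \<otimes> (b \<otimes> c)" "(a \<otimes> b) \<otimes> c"] by auto
  also have "\<dots> \<longleftrightarrow> associator G a b c \<in> N"
    using associator_unique[OF a b c] associator_law[OF a b c] by (metis sub_closed)
  finally show ?thesis .
qed

lemma center_preimage_iff:
  "x \<in> center_preimage \<longleftrightarrow> x \<in> carrier G \<and> (\<forall>a\<in>carrier G. \<forall>b\<in>carrier G.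
     (\<exists>n\<in>N. x \<otimes> a = (a \<otimes> x) \<otimes> n) \<and> associator G a b x \<in> N \<and> associator G x a b \<in> N \<and>
     associator G a x b \<in> N)"
proof (cases "x \<in> carrier G")
  case x: True
  have "coset x \<in> loop_center quotient \<longleftrightarrow> (\<forall>a\<in>carrier G. \<forall>b\<in>carrier G.
      coset a \<otimes>\<^bsub>quotient\<^esub> coset x = coset x \<otimes>\<^bsub>quotient\<^esub> coset a \<and>
      (coset a \<otimes>\<^bsub>quotient\<^esub> coset b) \<otimes>\<^bsub>quotient\<^esub> coset x =
        coset a \<otimes>\<^bsub>quotient\<^esub> (coset b \<otimes>\<^bsub>quotient\<^esub> coset x) \<and>
      (coset x \<otimes>\<^bsub>quotient\<^esub> coset a) \<otimes>\<^bsub>quotient\<^esub> coset b =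
        coset x \<otimes>\<^bsub>quotient\<^esub> (coset a \<otimes>\<^bsub>quotient\<^esub> coset b) \<and>
      (coset a \<otimes>\<^bsub>quotient\<^esub> coset x) \<otimes>\<^bsub>quotient\<^esub> coset b =
        coset a \<otimes>\<^bsub>quotient\<^esub> (coset x \<otimes>\<^bsub>quotient\<^esub> coset b))"
    unfolding Q.loop_center_eq_comm_nucleus Q.comm_nucleus_def quotient_carrier using x by blast
  also have "\<dots> \<longleftrightarrow> (\<forall>a\<in>carrier G. \<forall>b\<in>carrier G. coset (a \<otimes> x) = coset (x \<otimes> a) \<and>
      associator G a b x \<in> N \<and> associator G x a b \<in> N \<and> associator G a x b \<in> N)"
    using x by (simp add: quotient_mult coset_associator_iff)
  also have "\<dots> \<longleftrightarrow> (\<forall>a\<in>carrier G. \<forall>b\<in>carrier G. (\<exists>n\<in>N. x \<otimes> a = (a \<otimes> x) \<otimes> n) \<and>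
      associator G a b x \<in> N \<and> associator G x a b \<in> N \<and> associator G a x b \<in> N)"
    using x by (intro ball_cong[OF refl] conj_cong[OF _ refl] coset_eq_iff) auto
  finally show ?thesis unfolding center_preimage_def using x by simp
qed (simp add: center_preimage_def)

lemma center_preimage_closed [simp, intro]: "x \<in> center_preimage \<Longrightarrow> x \<in> carrier G"
  and associator_center_preimage_right:
    "x \<in> center_preimage \<Longrightarrow> a \<in> carrier G \<Longrightarrow> b \<in> carrier G \<Longrightarrow> associator G a b x \<in> N"
  and associator_center_preimage_left:
    "x \<in> center_preimage \<Longrightarrow> a \<in> carrier G \<Longrightarrow> b \<in> carrier G \<Longrightarrow> associator G x a b \<in> N"
  and associator_center_preimage_mid:
    "x \<in> center_preimage \<Longrightarrow> a \<in> carrier G \<Longrightarrow> b \<in> carrier G \<Longrightarrow> associator G a x b \<in> N"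
  unfolding center_preimage_iff by blast+

lemma coset_center_preimage:
  "x \<in> center_preimage \<Longrightarrow> coset x \<in> Q.comm_nucleus"
  unfolding center_preimage_def Q.loop_center_eq_comm_nucleus by blast

lemma center_preimage_mult [intro]:
  assumes x: "x \<in> center_preimage" and y: "y \<in> center_preimage"
  shows "x \<otimes> y \<in> center_preimage"
proof -
  have "coset x \<otimes>\<^bsub>quotient\<^esub> coset y \<in> Q.comm_nucleus"
    using coset_center_preimage[OF x] coset_center_preimage[OF y] by (rule Q.comm_nucleus_mult)
  then show ?thesis
    using x y unfolding center_preimage_def Q.loop_center_eq_comm_nucleus
    by (simp add: quotient_mult)
qed

lemma center_preimage_inverse:
  assumes x: "x \<in> center_preimage" and w: "w \<in> carrier G" and xw: "x \<otimes> w = \<one>"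
  shows "w \<in> center_preimage"
proof -
  have "coset x \<otimes>\<^bsub>quotient\<^esub> coset w = \<one>\<^bsub>quotient\<^esub>"
    using x w xw by (simp add: quotient_mult quotient_one)
  then have "coset w \<in> Q.comm_nucleus"
    using Q.comm_nucleus_inverse[OF coset_center_preimage[OF x]] w by (simp add: quotient_carrier)
  then show ?thesis
    unfolding center_preimage_def Q.loop_center_eq_comm_nucleus using w by simp
qed

lemma sub_subset_center_preimage: "N \<subseteq> center_preimage"
proof
  fix n assume n: "n \<in> N"
  then have "coset n = coset \<one>" using coset_eq_iff[of \<one> n] by auto
  then show "n \<in> center_preimage"
    unfolding center_preimage_def Q.loop_center_eq_comm_nucleus using n
    by (simp add: quotient_one[symmetric])
qed

lemma coset_in_quotient: "x \<in> carrier G \<Longrightarrow> coset x \<in> carrier quotient"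
  by (simp add: quotient_carrier)

lemma center_preimage_absorb:
  assumes u: "u \<in> carrier G" and x: "x \<in> carrier G" and k: "k \<in> center_preimage"
    and e: "coset u = coset (x \<otimes> k)"
  shows "\<exists>k'\<in>center_preimage. u = x \<otimes> k'"
proof
  have "coset x \<otimes>\<^bsub>quotient\<^esub> coset (ldiv x u) = coset x \<otimes>\<^bsub>quotient\<^esub> coset k"
    using e u x k by (simp add: quotient_mult)
  then have "coset (ldiv x u) = coset k"
    using Q.l_cancel[OF coset_in_quotient[OF x]] u x k by (simp add: coset_in_quotient)
  then show "ldiv x u \<in> center_preimage" using k u x unfolding center_preimage_def by simp
  show "u = x \<otimes> ldiv x u" using u x by simp
qed

lemma center_preimage_mult_sub_sub:
  assumes x: "x \<in> carrier G" and n: "n \<in> center_preimage" and m: "m \<in> center_preimage"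
  shows "\<exists>k\<in>center_preimage. (x \<otimes> n) \<otimes> m = x \<otimes> k"
proof -
  have "coset ((x \<otimes> n) \<otimes> m) = (coset x \<otimes>\<^bsub>quotient\<^esub> coset n) \<otimes>\<^bsub>quotient\<^esub> coset m"
    using x n m by (simp add: quotient_mult)
  also have "\<dots> = coset x \<otimes>\<^bsub>quotient\<^esub> (coset n \<otimes>\<^bsub>quotient\<^esub> coset m)"
    using x n by (intro Q.comm_nucleus_assoc_right coset_center_preimage m coset_in_quotient) auto
  also have "\<dots> = coset (x \<otimes> (n \<otimes> m))" using x n m by (simp add: quotient_mult)
  finally show ?thesis
    by (rule center_preimage_absorb[rotated 3]) (use x n m in auto)
qed

lemma center_preimage_mult_sub_inverse:
  assumes x: "x \<in> carrier G" and n: "n \<in> center_preimage"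
  shows "\<exists>k\<in>center_preimage. x = (x \<otimes> n) \<otimes> k"
proof -
  define k where "k = ldiv n \<one>"
  have k: "k \<in> center_preimage" "n \<otimes> k = \<one>"
    unfolding k_def using center_preimage_inverse[OF n] n by auto
  have "coset x = coset (x \<otimes> (n \<otimes> k))" using x k by simp
  also have "\<dots> = coset x \<otimes>\<^bsub>quotient\<^esub> (coset n \<otimes>\<^bsub>quotient\<^esub> coset k)"
    using x n k by (simp add: quotient_mult)
  also have "\<dots> = (coset x \<otimes>\<^bsub>quotient\<^esub> coset n) \<otimes>\<^bsub>quotient\<^esub> coset k"
    using x n by (intro Q.comm_nucleus_assoc_right[symmetric] coset_center_preimage k
        coset_in_quotient) auto
  also have "\<dots> = coset ((x \<otimes> n) \<otimes> k)" using x n k by (simp add: quotient_mult)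
  finally show ?thesis
    by (rule center_preimage_absorb[rotated 3]) (use x n k in auto)
qed

lemma center_preimage_coset_mult:
  assumes x: "x \<in> carrier G" and y: "y \<in> carrier G" and n: "n \<in> center_preimage" and m: "m \<in> center_preimage"
  shows "\<exists>k\<in>center_preimage. (x \<otimes> n) \<otimes> (y \<otimes> m) = (x \<otimes> y) \<otimes> k"
proof -
  have "coset ((x \<otimes> n) \<otimes> (y \<otimes> m)) =
      (coset x \<otimes>\<^bsub>quotient\<^esub> coset n) \<otimes>\<^bsub>quotient\<^esub> (coset y \<otimes>\<^bsub>quotient\<^esub> coset m)"
    using x y n m by (simp add: quotient_mult)
  also have "\<dots> = (coset x \<otimes>\<^bsub>quotient\<^esub> coset y) \<otimes>\<^bsub>quotient\<^esub> (coset n \<otimes>\<^bsub>quotient\<^esub> coset m)"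
    using x y by (intro Q.mult_mult_comm_nucleus coset_center_preimage n m coset_in_quotient)
  also have "\<dots> = coset ((x \<otimes> y) \<otimes> (n \<otimes> m))" using x y n m by (simp add: quotient_mult)
  finally show ?thesis
    by (rule center_preimage_absorb[rotated 3]) (use x y n m in auto)
qed

lemma center_preimage_coset_l_cancel:
  assumes x: "x \<in> carrier G" and y: "y \<in> carrier G" and y': "y' \<in> carrier G" and k: "k \<in> center_preimage" and e: "x \<otimes> y = (x \<otimes> y') \<otimes> k"
  shows "\<exists>k'\<in>center_preimage. y = y' \<otimes> k'"
proof -
  have "coset x \<otimes>\<^bsub>quotient\<^esub> coset y =
      (coset x \<otimes>\<^bsub>quotient\<^esub> coset y') \<otimes>\<^bsub>quotient\<^esub> coset k"
    using e x y y' k by (simp add: quotient_mult)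
  then have "coset y = coset y' \<otimes>\<^bsub>quotient\<^esub> coset k"
    by (rule Q.l_cancel_comm_nucleus[OF coset_in_quotient[OF x] coset_in_quotient[OF y]
        coset_in_quotient[OF y'] coset_center_preimage[OF k]])
  then have "coset y = coset (y' \<otimes> k)" using y' k by (simp add: quotient_mult)
  then show ?thesis
    by (rule center_preimage_absorb[rotated 3]) (use y y' k in auto)
qed

lemma center_preimage_coset_r_cancel:
  assumes x: "x \<in> carrier G" and y: "y \<in> carrier G" and y': "y' \<in> carrier G" and k: "k \<in> center_preimage" and e: "y \<otimes> x = (y' \<otimes> x) \<otimes> k"
  shows "\<exists>k'\<in>center_preimage. y = y' \<otimes> k'"
proof -
  have "coset y \<otimes>\<^bsub>quotient\<^esub> coset x =
      (coset y' \<otimes>\<^bsub>quotient\<^esub> coset x) \<otimes>\<^bsub>quotient\<^esub> coset k"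
    using e x y y' k by (simp add: quotient_mult)
  then have "coset y = coset y' \<otimes>\<^bsub>quotient\<^esub> coset k"
    by (rule Q.r_cancel_comm_nucleus[OF coset_in_quotient[OF x] coset_in_quotient[OF y]
        coset_in_quotient[OF y'] coset_center_preimage[OF k]])
  then have "coset y = coset (y' \<otimes> k)" using y' k by (simp add: quotient_mult)
  then show ?thesis
    by (rule center_preimage_absorb[rotated 3]) (use y y' k in auto)
qed

lemma subloop_quotient_center_preimage: "subloop_quotient G center_preimage"
proof unfold_locales
  show "center_preimage \<subseteq> carrier G" by blast
  show "\<one> \<in> center_preimage" using sub_subset_center_preimage one_sub by blast
qed (fact center_preimage_mult_sub_sub center_preimage_mult_sub_inverse center_preimage_coset_mult
    center_preimage_coset_l_cancel center_preimage_coset_r_cancel)+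

end

section \<open>Commutative automorphic loops of nilpotency class 3\<close>

locale comm_aut_loop3 = loop_struct Q for Q (structure) +
  assumes comm: "x \<in> carrier Q \<Longrightarrow> y \<in> carrier Q \<Longrightarrow> x \<otimes> y = y \<otimes> x"
    and inn_hom: "f \<in> inn Q \<Longrightarrow> x \<in> carrier Q \<Longrightarrow> y \<in> carrier Q \<Longrightarrow> f (x \<otimes> y) = f x \<otimes> f y"
    and upper_center_3: "upper_center Q 3 = carrier Q"
begin

interpretation Z0: subloop_quotient Q "{\<one>}"
  by unfold_locales (auto dest: l_cancel r_cancel)

lemma Z0_center_preimage: "Z0.center_preimage = comm_nucleus"
  unfolding set_eq_iff Z0.center_preimage_iff comm_nucleus_def mem_Collect_eq
  by (intro allI conj_cong refl ball_cong) (auto simp: associator_eq_one_iff)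

interpretation Z1: subloop_quotient Q comm_nucleus
  using Z0.subloop_quotient_center_preimage unfolding Z0_center_preimage .

abbreviation Z2 :: "'a set"
  where "Z2 \<equiv> Z1.center_preimage"

interpretation Z2: subloop_quotient Q Z2
  by (rule Z1.subloop_quotient_center_preimage)

lemma comm_nucleus_Z2 [intro]: "z \<in> comm_nucleus \<Longrightarrow> z \<in> Z2"
  using Z1.sub_subset_center_preimage by blast

lemma upper_center_3_eq: "upper_center Q 3 = Z2.center_preimage"
proof -
  have "upper_center Q 1 = comm_nucleus"
    using Z0_center_preimage unfolding Z0.center_preimage_def by simp
  then have "upper_center Q 2 = Z2"
    unfolding numeral_2_eq_2 One_nat_def[symmetric] upper_center.simps(2) Z1.center_preimage_def by simp
  then show ?thesis
    unfolding numeral_3_eq_3 numeral_2_eq_2[symmetric] upper_center.simps(2) Z2.center_preimage_def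
    by simp
qed

lemma associator_Z2:
  assumes "x \<in> carrier Q" "y \<in> carrier Q" "z \<in> carrier Q"
  shows "associator Q x y z \<in> Z2"
  using upper_center_3 upper_center_3_eq assms Z2.associator_center_preimage_right by blast

abbreviation asc :: "'a \<Rightarrow> 'a \<Rightarrow> 'a \<Rightarrow> 'a"
  where "asc x y z \<equiv> associator Q x y z"

definition center_group :: "'a monoid"
  where "center_group = \<lparr>carrier = comm_nucleus, mult = mult Q, one = one Q\<rparr>"

lemma comm_group_center_group: "comm_group center_group"
proof (rule comm_groupI, unfold center_group_def partial_object.simps monoid.simps)
  fix x y z assume x: "x \<in> comm_nucleus" and y: "y \<in> comm_nucleus" and z: "z \<in> comm_nucleus"
  show "x \<otimes> y \<in> comm_nucleus" using x y ..
  show "x \<otimes> y \<otimes> z = x \<otimes> (y \<otimes> z)" using comm_nucleus_assoc_right[OF z] x y by simp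
  show "x \<otimes> y = y \<otimes> x" using comm x y by simp
  show "\<one> \<otimes> x = x" using x by simp
  have "ldiv x \<one> \<otimes> x = \<one>" using comm[of "ldiv x \<one>" x] x by simp
  then show "\<exists>y\<in>comm_nucleus. y \<otimes> x = \<one>" using x by blast
qed simp

interpretation Cg: comm_group center_group
  rewrites "mult center_group = mult Q" and "carrier center_group = comm_nucleus"
    and "one center_group = one Q"
  by (rule comm_group_center_group) (simp_all add: center_group_def)

lemma associator_Z2_right_central [intro]:
    "A \<in> Z2 \<Longrightarrow> x \<in> carrier Q \<Longrightarrow> y \<in> carrier Q \<Longrightarrow> asc x y A \<in> comm_nucleus"
  and associator_Z2_left_central [intro]:
    "A \<in> Z2 \<Longrightarrow> x \<in> carrier Q \<Longrightarrow> y \<in> carrier Q \<Longrightarrow> asc A x y \<in> comm_nucleus"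
  and associator_Z2_mid_central [intro]:
    "A \<in> Z2 \<Longrightarrow> x \<in> carrier Q \<Longrightarrow> y \<in> carrier Q \<Longrightarrow> asc x A y \<in> comm_nucleus"
  by (simp_all add: Z1.associator_center_preimage_right Z1.associator_center_preimage_left
      Z1.associator_center_preimage_mid)

text \<open>The inner mapping \<open>L\<^sub>x\<^sub>,\<^sub>y\<close> sends \<open>w\<close> to \<open>w / (x,y,w)\<close> whenever \<open>(x,y,w)\<close> is central;
  since it is an automorphism, \<open>(x,y,-)\<close> is multiplicative on such arguments.\<close>

lemma associator_mult_right_central:
  assumes x: "x \<in> carrier Q" and y: "y \<in> carrier Q" and u: "u \<in> carrier Q" and v: "v \<in> carrier Q"
    and cu: "asc x y u \<in> comm_nucleus" and cv: "asc x y v \<in> comm_nucleus"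
    and cuv: "asc x y (u \<otimes> v) \<in> comm_nucleus"
  shows "asc x y (u \<otimes> v) = asc x y u \<otimes> asc x y v"
proof -
  obtain f where f: "f \<in> inn Q" and fv: "\<And>w. w \<in> carrier Q \<Longrightarrow> f w = ldiv (x \<otimes> y) (x \<otimes> (y \<otimes> w))"
    using left_inner_map_inn[OF x y] by blast
  have fc: "f w \<in> carrier Q" if "w \<in> carrier Q" for w using inn_closed[OF f that] .
  have key: "f w \<otimes> asc x y w = w" if w: "w \<in> carrier Q" and c: "asc x y w \<in> comm_nucleus" for w
  proof (rule l_cancel[of "x \<otimes> y"])
    have "(x \<otimes> y) \<otimes> (f w \<otimes> asc x y w) = ((x \<otimes> y) \<otimes> f w) \<otimes> asc x y w"
      using comm_nucleus_assoc_right[OF c, of "x \<otimes> y" "f w"] x y fc[OF w] by simp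
    also have "\<dots> = (x \<otimes> y) \<otimes> w" using fv[OF w] associator_law[OF x y w] x y w by simp
    finally show "(x \<otimes> y) \<otimes> (f w \<otimes> asc x y w) = (x \<otimes> y) \<otimes> w" .
  qed (use x y w fc[OF w] comm_nucleus_closed[OF c] in simp_all)
  have "f (u \<otimes> v) \<otimes> asc x y (u \<otimes> v) = u \<otimes> v" using key[OF _ cuv] u v by simp
  also have "u \<otimes> v = (f u \<otimes> asc x y u) \<otimes> (f v \<otimes> asc x y v)" using key[OF u cu] key[OF v cv] by simp
  also have "\<dots> = (f u \<otimes> f v) \<otimes> (asc x y u \<otimes> asc x y v)"
    using mult_mult_comm_nucleus[OF fc[OF u] fc[OF v] cu cv] .
  also have "f u \<otimes> f v = f (u \<otimes> v)" using inn_hom[OF f u v] by simp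
  finally show ?thesis
    using l_cancel[of "f (u \<otimes> v)" "asc x y (u \<otimes> v)" "asc x y u \<otimes> asc x y v"] fc x y u v cu cv
    by simp
qed

lemma associator_reverse_inverse:
  assumes x: "x \<in> carrier Q" and y: "y \<in> carrier Q" and z: "z \<in> carrier Q"
    and c: "asc x y z \<in> comm_nucleus"
  shows "asc z y x \<otimes> asc x y z = \<one>"
proof -
  let ?P = "(x \<otimes> y) \<otimes> z"
  have "(z \<otimes> y) \<otimes> x = (z \<otimes> (y \<otimes> x)) \<otimes> asc z y x" using associator_law[OF z y x] by simp
  moreover have "(z \<otimes> y) \<otimes> x = x \<otimes> (y \<otimes> z)" using comm[of "z \<otimes> y" x] comm[OF z y] x y z by simp
  moreover have "z \<otimes> (y \<otimes> x) = ?P" using comm[of z "y \<otimes> x"] comm[OF y x] x y z by simp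
  ultimately have reversed: "x \<otimes> (y \<otimes> z) = ?P \<otimes> asc z y x" by simp
  have "?P \<otimes> \<one> = (x \<otimes> (y \<otimes> z)) \<otimes> asc x y z" using associator_law[OF x y z] x y z by simp
  also have "\<dots> = (?P \<otimes> asc z y x) \<otimes> asc x y z" using reversed by simp
  also have "\<dots> = ?P \<otimes> (asc z y x \<otimes> asc x y z)"
    using comm_nucleus_assoc_right[OF c, of ?P "asc z y x"] x y z by simp
  finally show ?thesis using l_cancel[of ?P \<one> "asc z y x \<otimes> asc x y z"] x y z by simp
qed

lemma associator_Z2_right_split:
  assumes x: "x \<in> carrier Q" and y: "y \<in> carrier Q" and A: "A \<in> Z2"
  shows "asc x A y \<otimes> asc y x A = asc x y A"
proof -
  have Ac: "A \<in> carrier Q" using A by simp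
  let ?R = "x \<otimes> (y \<otimes> A)"
  have "(x \<otimes> A) \<otimes> y = (x \<otimes> (A \<otimes> y)) \<otimes> asc x A y" using associator_law[OF x Ac y] by simp
  then have swapped: "y \<otimes> (x \<otimes> A) = ?R \<otimes> asc x A y"
    using comm[OF m_closed[OF x Ac] y] comm[OF Ac y] by simp
  have "?R \<otimes> asc x y A = (x \<otimes> y) \<otimes> A" using associator_law[OF x y Ac] .
  also have "\<dots> = (y \<otimes> x) \<otimes> A" using comm[OF x y] by simp
  also have "\<dots> = (y \<otimes> (x \<otimes> A)) \<otimes> asc y x A" using associator_law[OF y x Ac] by simp
  also have "\<dots> = (?R \<otimes> asc x A y) \<otimes> asc y x A" using swapped by simp
  also have "\<dots> = ?R \<otimes> (asc x A y \<otimes> asc y x A)"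
    using comm_nucleus_assoc_right[OF associator_Z2_right_central[OF A y x], of ?R "asc x A y"] x y Ac
    by simp
  finally show ?thesis
    using l_cancel[of ?R "asc x y A" "asc x A y \<otimes> asc y x A"] x y Ac by simp
qed

lemma associator_mult_right_Z2:
  assumes "x \<in> carrier Q" "y \<in> carrier Q" "A \<in> Z2" "B \<in> Z2"
  shows "asc x y (A \<otimes> B) = asc x y A \<otimes> asc x y B"
  by (rule associator_mult_right_central) (use assms in auto)

lemma associator_mult_right_Z2_left:
  assumes "A \<in> Z2" "x \<in> carrier Q" "u \<in> carrier Q" "v \<in> carrier Q"
  shows "asc A x (u \<otimes> v) = asc A x u \<otimes> asc A x v"
  by (rule associator_mult_right_central) (use assms in auto)

lemma associator_mult_right_Z2_mid:
  assumes "A \<in> Z2" "x \<in> carrier Q" "u \<in> carrier Q" "v \<in> carrier Q"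
  shows "asc x A (u \<otimes> v) = asc x A u \<otimes> asc x A v"
  by (rule associator_mult_right_central) (use assms in auto)

lemma associator_Z2_reverse:
  assumes A: "A \<in> Z2" and y: "y \<in> carrier Q" and u: "u \<in> carrier Q"
  shows "asc u y A = inv\<^bsub>center_group\<^esub> (asc A y u)"
  using associator_reverse_inverse[of A y u] A y u by (auto intro: Cg.inv_equality[symmetric])

lemma associator_mult_left_Z2_right:
  assumes u: "u \<in> carrier Q" and v: "v \<in> carrier Q" and y: "y \<in> carrier Q" and A: "A \<in> Z2"
  shows "asc (u \<otimes> v) y A = asc u y A \<otimes> asc v y A"
proof -
  have "asc (u \<otimes> v) y A = inv\<^bsub>center_group\<^esub> (asc A y u \<otimes> asc A y v)"
    using associator_Z2_reverse[OF A y] associator_mult_right_Z2_left[OF A y u v] u v by simp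
  also have "\<dots> = asc u y A \<otimes> asc v y A"
    using Cg.inv_mult[of "asc A y u" "asc A y v"] associator_Z2_reverse[OF A y] A y u v by auto
  finally show ?thesis .
qed

lemma associator_mult_mid_Z2_right:
  assumes x: "x \<in> carrier Q" and u: "u \<in> carrier Q" and v: "v \<in> carrier Q" and A: "A \<in> Z2"
  shows "asc x (u \<otimes> v) A = asc x u A \<otimes> asc x v A"
proof -
  have "asc x (u \<otimes> v) A = (asc x A u \<otimes> asc x A v) \<otimes> (asc u x A \<otimes> asc v x A)"
    using associator_Z2_right_split[of x "u \<otimes> v" A] associator_mult_right_Z2_mid[OF A x u v]
      associator_mult_left_Z2_right[OF u v x A] x u v A by simp
  also have "\<dots> = (asc x A u \<otimes> asc u x A) \<otimes> (asc x A v \<otimes> asc v x A)"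
    using A x u v by (simp add: Cg.m_ac associator_Z2_right_central associator_Z2_mid_central)
  also have "\<dots> = asc x u A \<otimes> asc x v A"
    using associator_Z2_right_split[OF x u A] associator_Z2_right_split[OF x v A] by simp
  finally show ?thesis .
qed

lemma central_hom_associator:
  assumes hc: "\<And>u. u \<in> carrier Q \<Longrightarrow> h u \<in> comm_nucleus"
    and hm: "\<And>u v. u \<in> carrier Q \<Longrightarrow> v \<in> carrier Q \<Longrightarrow> h (u \<otimes> v) = h u \<otimes> h v"
    and p: "p \<in> carrier Q" and q: "q \<in> carrier Q" and r: "r \<in> carrier Q"
  shows "h (asc p q r) = \<one>"
proof -
  have "(h p \<otimes> h q) \<otimes> h r = h ((p \<otimes> q) \<otimes> r)" using hm p q r by simp
  also have "\<dots> = h (p \<otimes> (q \<otimes> r)) \<otimes> h (asc p q r)"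
    using hm[of "p \<otimes> (q \<otimes> r)" "asc p q r"] associator_law[OF p q r] p q r by simp
  also have "h (p \<otimes> (q \<otimes> r)) = (h p \<otimes> h q) \<otimes> h r"
    using hm p q r hc by (simp add: Cg.m_assoc)
  finally show ?thesis using hc p q r by simp
qed

text \<open>All associators lie in the following subset of \<open>Z\<^sub>2\<close>, which is an abelian group under the
  loop multiplication; this is what allows products of associators to be rearranged freely.\<close>

definition Z2_neutral :: "'a set"
  where "Z2_neutral = {u \<in> Z2. \<forall>A\<in>Z2. \<forall>x\<in>carrier Q. asc x u A = \<one> \<and> asc u x A = \<one>}"

lemma Z2_neutral_Z2 [simp]: "u \<in> Z2_neutral \<Longrightarrow> u \<in> Z2"
  and associator_mid_Z2_neutral:
    "u \<in> Z2_neutral \<Longrightarrow> A \<in> Z2 \<Longrightarrow> x \<in> carrier Q \<Longrightarrow> asc x u A = \<one>"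
  and associator_left_Z2_neutral:
    "u \<in> Z2_neutral \<Longrightarrow> A \<in> Z2 \<Longrightarrow> x \<in> carrier Q \<Longrightarrow> asc u x A = \<one>"
  unfolding Z2_neutral_def by blast+

lemma Z2_neutralI:
  assumes "u \<in> Z2" and "\<And>A x. A \<in> Z2 \<Longrightarrow> x \<in> carrier Q \<Longrightarrow> asc x u A = \<one> \<and> asc u x A = \<one>"
  shows "u \<in> Z2_neutral"
  using assms unfolding Z2_neutral_def by blast

lemma associator_Z2_neutral:
  assumes p: "p \<in> carrier Q" and q: "q \<in> carrier Q" and r: "r \<in> carrier Q"
  shows "asc p q r \<in> Z2_neutral"
proof (rule Z2_neutralI)
  show "asc p q r \<in> Z2" using associator_Z2[OF p q r] .
  fix A x assume A: "A \<in> Z2" and x: "x \<in> carrier Q"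
  have "asc x (asc p q r) A = \<one>"
    by (rule central_hom_associator[where h = "\<lambda>u. asc x u A"])
      (use A x p q r associator_mult_mid_Z2_right in auto)
  moreover have "asc (asc p q r) x A = \<one>"
    by (rule central_hom_associator[where h = "\<lambda>u. asc u x A"])
      (use A x p q r associator_mult_left_Z2_right in auto)
  ultimately show "asc x (asc p q r) A = \<one> \<and> asc (asc p q r) x A = \<one>" ..
qed

lemma comm_nucleus_Z2_neutral [simp]: "z \<in> comm_nucleus \<Longrightarrow> z \<in> Z2_neutral"
  by (rule Z2_neutralI) (auto simp: associator_comm_nucleus_mid associator_comm_nucleus_left)

lemma Z2_neutral_mult:
  assumes u: "u \<in> Z2_neutral" and v: "v \<in> Z2_neutral"
  shows "u \<otimes> v \<in> Z2_neutral"
proof (rule Z2_neutralI)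
  show "u \<otimes> v \<in> Z2" using u v by (intro Z1.center_preimage_mult) simp_all
  fix A x assume A: "A \<in> Z2" and x: "x \<in> carrier Q"
  show "asc x (u \<otimes> v) A = \<one> \<and> asc (u \<otimes> v) x A = \<one>"
    using associator_mult_mid_Z2_right[OF x _ _ A] associator_mult_left_Z2_right[OF _ _ x A]
      associator_mid_Z2_neutral[OF _ A x] associator_left_Z2_neutral[OF _ A x] u v
    by simp
qed

lemma Z2_neutral_inverse:
  assumes u: "u \<in> Z2_neutral"
  shows "ldiv u \<one> \<in> Z2_neutral"
proof (rule Z2_neutralI)
  have uc: "u \<in> carrier Q" using u by simp
  show "ldiv u \<one> \<in> Z2" using Z1.center_preimage_inverse[of u "ldiv u \<one>"] u by simp
  have inv: "ldiv u \<one> \<otimes> u = \<one>" using comm[of "ldiv u \<one>" u] uc by simp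
  have uinv: "ldiv u \<one> \<in> carrier Q" using uc by simp
  fix A x assume A: "A \<in> Z2" and x: "x \<in> carrier Q"
  have "asc x (ldiv u \<one>) A \<otimes> asc x u A = asc x \<one> A"
    using associator_mult_mid_Z2_right[OF x uinv uc A] inv by simp
  moreover have "asc (ldiv u \<one>) x A \<otimes> asc u x A = asc \<one> x A"
    using associator_mult_left_Z2_right[OF uinv uc x A] inv by simp
  ultimately show "asc x (ldiv u \<one>) A = \<one> \<and> asc (ldiv u \<one>) x A = \<one>"
    using associator_mid_Z2_neutral[OF u A x] associator_left_Z2_neutral[OF u A x]
      associator_comm_nucleus_mid[OF one_comm_nucleus x] associator_comm_nucleus_left[OF one_comm_nucleus x]
      uc x A by simp
qed

definition Z2_neutral_group :: "'a monoid"
  where "Z2_neutral_group = \<lparr>carrier = Z2_neutral, mult = mult Q, one = one Q\<rparr>"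

lemma comm_group_Z2_neutral_group: "comm_group Z2_neutral_group"
proof (rule comm_groupI, unfold Z2_neutral_group_def partial_object.simps monoid.simps)
  fix x y z assume x: "x \<in> Z2_neutral" and y: "y \<in> Z2_neutral" and z: "z \<in> Z2_neutral"
  show "x \<otimes> y \<in> Z2_neutral" using Z2_neutral_mult[OF x y] .
  show "x \<otimes> y \<otimes> z = x \<otimes> (y \<otimes> z)"
    using associator_mid_Z2_neutral[OF y, of z x] associator_eq_one_iff[of x y z] x y z by simp
  show "x \<otimes> y = y \<otimes> x" using comm x y by simp
  show "\<one> \<otimes> x = x" using x by simp
  have "ldiv x \<one> \<otimes> x = \<one>" using comm[of "ldiv x \<one>" x] x by simp
  then show "\<exists>y\<in>Z2_neutral. y \<otimes> x = \<one>" using Z2_neutral_inverse[OF x] by blast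
qed simp

interpretation Ng: comm_group Z2_neutral_group
  rewrites "mult Z2_neutral_group = mult Q" and "carrier Z2_neutral_group = Z2_neutral"
    and "one Z2_neutral_group = one Q"
  by (rule comm_group_Z2_neutral_group) (simp_all add: Z2_neutral_group_def)

abbreviation Z2_neutral_inv :: "'a \<Rightarrow> 'a"
  where "Z2_neutral_inv u \<equiv> inv\<^bsub>Z2_neutral_group\<^esub> u"

lemma associator_Z2_right_Z2_neutral [simp]:
    "A \<in> Z2 \<Longrightarrow> x \<in> carrier Q \<Longrightarrow> y \<in> carrier Q \<Longrightarrow> asc x y A \<in> Z2_neutral"
  and associator_Z2_left_Z2_neutral [simp]:
    "A \<in> Z2 \<Longrightarrow> x \<in> carrier Q \<Longrightarrow> y \<in> carrier Q \<Longrightarrow> asc A x y \<in> Z2_neutral"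
  and associator_Z2_mid_Z2_neutral [simp]:
    "A \<in> Z2 \<Longrightarrow> x \<in> carrier Q \<Longrightarrow> y \<in> carrier Q \<Longrightarrow> asc x A y \<in> Z2_neutral"
  by (simp_all add: associator_Z2_right_central associator_Z2_left_central associator_Z2_mid_central)

lemma associator_Z2_reverse_inverse:
  assumes A: "A \<in> Z2" and p: "p \<in> carrier Q" and q: "q \<in> carrier Q"
  shows "asc A p q \<otimes> asc q p A = \<one>"
  using associator_reverse_inverse[OF q p _ associator_Z2_right_central[OF A q p]] A by simp

lemma associator_Z2_mid_split:
  assumes A: "A \<in> Z2" and p: "p \<in> carrier Q" and q: "q \<in> carrier Q"
  shows "asc A p q \<otimes> asc p q A = asc p A q"
proof -
  have "asc A p q \<otimes> asc p q A = asc p A q \<otimes> (asc A p q \<otimes> asc q p A)"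
    using associator_Z2_right_split[OF p q A] A p q by (simp add: Ng.m_ac)
  then show ?thesis using associator_Z2_reverse_inverse[OF A p q] A p q by simp
qed

lemma associator_mult_left_Z2_mid:
  assumes u: "u \<in> carrier Q" and v: "v \<in> carrier Q" and q: "q \<in> carrier Q" and A: "A \<in> Z2"
  shows "asc (u \<otimes> v) A q = asc u A q \<otimes> asc v A q"
proof -
  have "asc (u \<otimes> v) A q \<otimes> (asc q u A \<otimes> asc q v A) = asc (u \<otimes> v) q A"
    using associator_mult_mid_Z2_right[OF q u v A] associator_Z2_right_split[of "u \<otimes> v" q A] u v q A
    by simp
  also have "\<dots> = (asc u A q \<otimes> asc v A q) \<otimes> (asc q u A \<otimes> asc q v A)"
    using associator_mult_left_Z2_right[OF u v q A] associator_Z2_right_split[OF u q A, symmetric]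
      associator_Z2_right_split[OF v q A, symmetric] u v q A by (simp add: Ng.m_ac)
  finally show ?thesis using u v q A by simp
qed

lemma associator_mult_mid_Z2:
  assumes p: "p \<in> carrier Q" and q: "q \<in> carrier Q" and A: "A \<in> Z2" and B: "B \<in> Z2"
  shows "asc p (A \<otimes> B) q = asc p A q \<otimes> asc p B q"
proof -
  have AB: "A \<otimes> B \<in> Z2" using A B ..
  have "asc p (A \<otimes> B) q \<otimes> (asc q p A \<otimes> asc q p B) = asc p q (A \<otimes> B)"
    using associator_mult_right_Z2[OF q p A B] associator_Z2_right_split[OF p q AB] by simp
  also have "\<dots> = (asc p A q \<otimes> asc p B q) \<otimes> (asc q p A \<otimes> asc q p B)"
    using associator_mult_right_Z2[OF p q A B] associator_Z2_right_split[OF p q A, symmetric]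
      associator_Z2_right_split[OF p q B, symmetric] p q A B by (simp add: Ng.m_ac)
  finally show ?thesis using p q A B AB by simp
qed

lemma associator_mult_left_Z2:
  assumes A: "A \<in> Z2" and B: "B \<in> Z2" and p: "p \<in> carrier Q" and q: "q \<in> carrier Q"
  shows "asc (A \<otimes> B) p q = asc A p q \<otimes> asc B p q"
proof -
  have AB: "A \<otimes> B \<in> Z2" using A B ..
  have "asc (A \<otimes> B) p q \<otimes> (asc q p A \<otimes> asc q p B) = \<one>"
    using associator_mult_right_Z2[OF q p A B] associator_Z2_reverse_inverse[OF AB p q] by simp
  also have "\<dots> = (asc A p q \<otimes> asc B p q) \<otimes> (asc q p A \<otimes> asc q p B)"
    using associator_Z2_reverse_inverse[OF A p q] associator_Z2_reverse_inverse[OF B p q] A B p q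
    by (simp add: Ng.m_ac)
  finally show ?thesis using A B p q AB by simp
qed

lemma Z2_left_factor_swap:
  assumes w: "w \<in> carrier Q" and m: "m \<in> carrier Q" and d: "d \<in> Z2" and fw: "fw \<in> carrier Q"
    and e: "m \<otimes> fw = (m \<otimes> w) \<otimes> d"
  shows "fw \<otimes> asc w d m = (w \<otimes> d) \<otimes> asc w m d"
proof -
  have dc: "d \<in> carrier Q" using d by simp
  let ?R = "w \<otimes> (m \<otimes> d)" and ?a = "asc w m d" and ?b = "asc w d m"
  have a: "?a \<in> comm_nucleus" and b: "?b \<in> comm_nucleus" using d w m by auto
  have R: "?R \<in> carrier Q" using w m dc by simp
  have "m \<otimes> (fw \<otimes> ?b) = (?R \<otimes> ?a) \<otimes> ?b"
    using comm_nucleus_assoc_right[OF b m fw] e comm[OF m w] associator_law[OF w m dc] by simp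
  also have "\<dots> = (?R \<otimes> ?b) \<otimes> ?a" using comm_nucleus_swap[OF a R] b by simp
  also have "?R \<otimes> ?b = (w \<otimes> d) \<otimes> m" using associator_law[OF w dc m] comm[OF dc m] by simp
  also have "((w \<otimes> d) \<otimes> m) \<otimes> ?a = m \<otimes> ((w \<otimes> d) \<otimes> ?a)"
    using comm_nucleus_swap[of ?a "w \<otimes> d" m] comm[of m "(w \<otimes> d) \<otimes> ?a"] a w m dc by simp
  finally show ?thesis
    using l_cancel[of m "fw \<otimes> ?b" "(w \<otimes> d) \<otimes> ?a"] m fw a b w dc by simp
qed

lemma mult_mult_Z2_neutral:
  assumes x: "x \<in> carrier Q" and y: "y \<in> carrier Q" and al: "al \<in> Z2_neutral" and be: "be \<in> Z2_neutral"
  shows "((x \<otimes> al) \<otimes> (y \<otimes> be)) \<otimes> (asc x y be \<otimes> asc x y al) = ((x \<otimes> y) \<otimes> (al \<otimes> be)) \<otimes> asc x al y"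
proof -
  have alc: "al \<in> carrier Q" and bec: "be \<in> carrier Q" and alZ: "al \<in> Z2" and beZ: "be \<in> Z2"
    using al be by auto
  let ?R = "x \<otimes> (y \<otimes> al)" and ?c1 = "asc x al y" and ?c2 = "asc x y al" and ?c3 = "asc x y be"
  have c1: "?c1 \<in> comm_nucleus" and c2: "?c2 \<in> comm_nucleus" and c3: "?c3 \<in> comm_nucleus"
    using alZ beZ x y by auto
  have R: "?R \<in> carrier Q" using x y alc by simp
  have swap_al: "((x \<otimes> al) \<otimes> y) \<otimes> ?c2 = ((x \<otimes> y) \<otimes> al) \<otimes> ?c1"
  proof -
    have "((x \<otimes> al) \<otimes> y) \<otimes> ?c2 = (?R \<otimes> ?c1) \<otimes> ?c2"
      using associator_law[OF x alc y] comm[OF alc y] by simp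
    also have "\<dots> = (?R \<otimes> ?c2) \<otimes> ?c1" using comm_nucleus_swap[OF c1 R] c2 by simp
    also have "?R \<otimes> ?c2 = (x \<otimes> y) \<otimes> al" using associator_law[OF x y alc] .
    finally show ?thesis .
  qed
  have attach_be: "((x \<otimes> al) \<otimes> y) \<otimes> be = ((x \<otimes> al) \<otimes> (y \<otimes> be)) \<otimes> ?c3"
    using associator_law[of "x \<otimes> al" y be] associator_mult_left_Z2_right[OF x alc y beZ]
      associator_left_Z2_neutral[OF al beZ y] c3 x y alc bec by simp
  have "((x \<otimes> al) \<otimes> (y \<otimes> be)) \<otimes> (?c3 \<otimes> ?c2) = (((x \<otimes> al) \<otimes> y) \<otimes> be) \<otimes> ?c2"
    using comm_nucleus_assoc_right[OF c2, of "(x \<otimes> al) \<otimes> (y \<otimes> be)" ?c3] attach_be x y alc bec c3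
    by simp
  also have "\<dots> = (((x \<otimes> y) \<otimes> al) \<otimes> ?c1) \<otimes> be"
    using comm_nucleus_swap[OF c2, of "(x \<otimes> al) \<otimes> y" be] swap_al x y alc bec by simp
  also have "\<dots> = (((x \<otimes> y) \<otimes> al) \<otimes> be) \<otimes> ?c1"
    using comm_nucleus_swap[OF c1, of "(x \<otimes> y) \<otimes> al" be] x y alc bec by simp
  also have "((x \<otimes> y) \<otimes> al) \<otimes> be = (x \<otimes> y) \<otimes> (al \<otimes> be)"
    using associator_mid_Z2_neutral[OF al beZ, of "x \<otimes> y"] associator_eq_one_iff[of "x \<otimes> y" al be]
      x y alc bec by simp
  finally show ?thesis .
qed

subsection \<open>Expanding the defect of an inner mapping\<close>

lemma mult_twisted_factors:
  assumes x: "x \<in> carrier Q" and y: "y \<in> carrier Q" and fx: "fx \<in> carrier Q" and fy: "fy \<in> carrier Q"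
    and al: "al \<in> Z2_neutral" and be: "be \<in> Z2_neutral"
    and ax: "ax \<in> comm_nucleus" and ay: "ay \<in> comm_nucleus"
    and bx: "bx \<in> comm_nucleus" and "by" : "by \<in> comm_nucleus"
    and ex: "fx \<otimes> ax = (x \<otimes> al) \<otimes> bx" and ey: "fy \<otimes> ay = (y \<otimes> be) \<otimes> by"
  shows "(fx \<otimes> fy) \<otimes> ((ax \<otimes> ay) \<otimes> (asc x y be \<otimes> asc x y al)) =
    ((x \<otimes> y) \<otimes> (al \<otimes> be)) \<otimes> (asc x al y \<otimes> (bx \<otimes> by))"
proof -
  let ?c = "asc x y be \<otimes> asc x y al"
  have c: "?c \<in> comm_nucleus" using al be x y by (intro comm_nucleus_mult) auto
  have xa: "x \<otimes> al \<in> carrier Q" and yb: "y \<otimes> be \<in> carrier Q" using x y al be by auto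
  have "(fx \<otimes> fy) \<otimes> ((ax \<otimes> ay) \<otimes> ?c) = ((fx \<otimes> ax) \<otimes> (fy \<otimes> ay)) \<otimes> ?c"
    using mult_mult_comm_nucleus[OF fx fy ax ay] comm_nucleus_assoc_right[OF c, of "fx \<otimes> fy" "ax \<otimes> ay"]
      fx fy ax ay by simp
  also have "\<dots> = (((x \<otimes> al) \<otimes> (y \<otimes> be)) \<otimes> (bx \<otimes> by)) \<otimes> ?c"
    using ex ey mult_mult_comm_nucleus[OF xa yb bx "by"] by simp
  also have "\<dots> = (((x \<otimes> al) \<otimes> (y \<otimes> be)) \<otimes> ?c) \<otimes> (bx \<otimes> by)"
    using comm_nucleus_swap[of "bx \<otimes> by" "(x \<otimes> al) \<otimes> (y \<otimes> be)" ?c] xa yb bx "by" c by auto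
  also have "\<dots> = (((x \<otimes> y) \<otimes> (al \<otimes> be)) \<otimes> asc x al y) \<otimes> (bx \<otimes> by)"
    using mult_mult_Z2_neutral[OF x y al be] by simp
  also have "\<dots> = ((x \<otimes> y) \<otimes> (al \<otimes> be)) \<otimes> (asc x al y \<otimes> (bx \<otimes> by))"
    using comm_nucleus_assoc_right[of "bx \<otimes> by" "(x \<otimes> y) \<otimes> (al \<otimes> be)" "asc x al y"] x y al be bx "by"
    by auto
  finally show ?thesis .
qed

lemma compare_central_twists:
  assumes u: "u \<in> carrier Q" and P: "P \<in> carrier Q" and a: "a \<in> carrier Q" and c: "c \<in> carrier Q"
    and W: "W \<in> comm_nucleus" and X: "X \<in> comm_nucleus" and g: "g \<in> comm_nucleus" and h: "h \<in> comm_nucleus"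
    and eW: "u \<otimes> W = (P \<otimes> a) \<otimes> X" and eg: "u \<otimes> g = (P \<otimes> c) \<otimes> h"
  shows "a \<otimes> (X \<otimes> g) = c \<otimes> (h \<otimes> W)"
proof (rule l_cancel[of P])
  have "P \<otimes> (a \<otimes> (X \<otimes> g)) = ((P \<otimes> a) \<otimes> X) \<otimes> g"
    using comm_nucleus_assoc_right[of g "P \<otimes> a" X] comm_nucleus_assoc_right[of "X \<otimes> g" P a] P a X g by auto
  also have "\<dots> = u \<otimes> (g \<otimes> W)"
    using eW comm_nucleus_assoc_right[OF g u, of W] comm_nucleus_comm[OF W, of g] u W g by simp
  also have "\<dots> = ((P \<otimes> c) \<otimes> h) \<otimes> W" using eg comm_nucleus_assoc_right[OF W u, of g] u g by simp
  also have "\<dots> = P \<otimes> (c \<otimes> (h \<otimes> W))"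
    using comm_nucleus_assoc_right[of W "P \<otimes> c" h] comm_nucleus_assoc_right[of "h \<otimes> W" P c] P c h W by auto
  finally show "P \<otimes> (a \<otimes> (X \<otimes> g)) = P \<otimes> (c \<otimes> (h \<otimes> W))" .
qed (use P a c W X g h in auto)

lemma defect_mult_relation:
  assumes f: "f \<in> inn Q" and m: "m \<in> carrier Q"
    and D: "\<And>w. w \<in> carrier Q \<Longrightarrow> D w \<in> Z2_neutral"
    and De: "\<And>w. w \<in> carrier Q \<Longrightarrow> m \<otimes> f w = (m \<otimes> w) \<otimes> D w"
    and x: "x \<in> carrier Q" and y: "y \<in> carrier Q"
  shows "(D x \<otimes> D y) \<otimes> ((asc x (D x) y \<otimes> (asc x m (D x) \<otimes> asc y m (D y))) \<otimes> asc (x \<otimes> y) (D (x \<otimes> y)) m)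
    = D (x \<otimes> y) \<otimes> (asc (x \<otimes> y) m (D (x \<otimes> y)) \<otimes>
        ((asc x (D x) m \<otimes> asc y (D y) m) \<otimes> (asc x y (D y) \<otimes> asc x y (D x))))"
proof -
  have fc: "\<And>w. w \<in> carrier Q \<Longrightarrow> f w \<in> carrier Q" using inn_closed[OF f] .
  have DZ: "\<And>w. w \<in> carrier Q \<Longrightarrow> D w \<in> Z2" using D by simp
  have shift: "f w \<otimes> asc w (D w) m = (w \<otimes> D w) \<otimes> asc w m (D w)" if "w \<in> carrier Q" for w
    using Z2_left_factor_swap[OF that m DZ[OF that] fc[OF that] De[OF that]] .
  have cx: "asc x (D x) m \<in> comm_nucleus" "asc x m (D x) \<in> comm_nucleus" "asc x (D x) y \<in> comm_nucleus"
    "asc x y (D x) \<in> comm_nucleus" using DZ x y m by auto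
  have cy: "asc y (D y) m \<in> comm_nucleus" "asc y m (D y) \<in> comm_nucleus" "asc x y (D y) \<in> comm_nucleus"
    using DZ x y m by auto
  have cxy: "asc (x \<otimes> y) (D (x \<otimes> y)) m \<in> comm_nucleus" "asc (x \<otimes> y) m (D (x \<otimes> y)) \<in> comm_nucleus"
    using DZ[of "x \<otimes> y"] x y m by auto
  have eW: "f (x \<otimes> y) \<otimes> ((asc x (D x) m \<otimes> asc y (D y) m) \<otimes> (asc x y (D y) \<otimes> asc x y (D x))) =
      ((x \<otimes> y) \<otimes> (D x \<otimes> D y)) \<otimes> (asc x (D x) y \<otimes> (asc x m (D x) \<otimes> asc y m (D y)))"
    using mult_twisted_factors[OF x y fc[OF x] fc[OF y] D[OF x] D[OF y] cx(1) cy(1) cx(2) cy(2)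
        shift[OF x] shift[OF y]] inn_hom[OF f x y] by simp
  have eg: "f (x \<otimes> y) \<otimes> asc (x \<otimes> y) (D (x \<otimes> y)) m =
      ((x \<otimes> y) \<otimes> D (x \<otimes> y)) \<otimes> asc (x \<otimes> y) m (D (x \<otimes> y))"
    using shift[of "x \<otimes> y"] x y by simp
  show ?thesis
    by (rule compare_central_twists[OF _ _ _ _ _ _ _ _ eW eg])
      (use fc x y D cx cy cxy in \<open>auto intro: comm_nucleus_mult\<close>)
qed

lemma defect_mult_expansion:
  assumes f: "f \<in> inn Q" and m: "m \<in> carrier Q"
    and D: "\<And>w. w \<in> carrier Q \<Longrightarrow> D w \<in> Z2_neutral"
    and De: "\<And>w. w \<in> carrier Q \<Longrightarrow> m \<otimes> f w = (m \<otimes> w) \<otimes> D w"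
    and x: "x \<in> carrier Q" and y: "y \<in> carrier Q"
  shows "D (x \<otimes> y) = (D x \<otimes> D y) \<otimes>
    (((asc (D x) x y \<otimes> asc (D y) y x) \<otimes> asc (D y) x m) \<otimes> asc (D x) y m)"
proof -
  define al where "al = D x"
  define be where "be = D y"
  define ga where "ga = D (x \<otimes> y)"
  define X where "X = asc x al y \<otimes> (asc x m al \<otimes> asc y m be)"
  define g where "g = asc (x \<otimes> y) ga m"
  define h where "h = asc (x \<otimes> y) m ga"
  define W where "W = (asc x al m \<otimes> asc y be m) \<otimes> (asc x y be \<otimes> asc x y al)"
  have K: "al \<in> Z2_neutral" "be \<in> Z2_neutral" "ga \<in> Z2_neutral"
    unfolding al_def be_def ga_def using D x y by auto
  then have Z: "al \<in> Z2" "be \<in> Z2" "ga \<in> Z2" by auto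
  have central: "X \<in> comm_nucleus" "g \<in> comm_nucleus" "h \<in> comm_nucleus" "W \<in> comm_nucleus"
    unfolding X_def g_def h_def W_def using Z x y m by (auto intro!: comm_nucleus_mult)
  have rel: "(al \<otimes> be) \<otimes> (X \<otimes> g) = ga \<otimes> (h \<otimes> W)"
    unfolding al_def be_def ga_def X_def g_def h_def W_def by (rule defect_mult_relation[OF f m D De x y])
  txt \<open>Modulo the centre, \<open>ga\<close> equals \<open>al be\<close>, so \<open>g\<close> and \<open>h\<close> can be expanded multilinearly.\<close>
  define z where "z = (X \<otimes> g) \<otimes> ldiv (h \<otimes> W) \<one>"
  have z: "z \<in> comm_nucleus" unfolding z_def using central by (auto intro!: comm_nucleus_mult)
  have hW: "h \<otimes> W \<in> Z2_neutral" "ldiv (h \<otimes> W) \<one> \<in> Z2_neutral"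
    using comm_nucleus_mult[OF central(3,4)] comm_nucleus_ldiv_one by simp_all
  have "ga = ga \<otimes> ((h \<otimes> W) \<otimes> ldiv (h \<otimes> W) \<one>)" using K central by simp
  also have "\<dots> = ((al \<otimes> be) \<otimes> (X \<otimes> g)) \<otimes> ldiv (h \<otimes> W) \<one>"
    using rel K hW by (simp add: Ng.m_assoc)
  also have "\<dots> = (al \<otimes> be) \<otimes> z"
    unfolding z_def using K central hW by (simp add: Ng.m_assoc Z2_neutral_mult)
  finally have ga: "ga = (al \<otimes> be) \<otimes> z" .
  have g: "g = (asc x al m \<otimes> asc y al m) \<otimes> (asc x be m \<otimes> asc y be m)"
    unfolding g_def ga using associator_mult_mid_Z2 associator_comm_nucleus_mid[OF z]
      associator_mult_left_Z2_mid Z Z2_neutral_mult K z x y m by simp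
  have h: "h = (asc x m al \<otimes> asc y m al) \<otimes> (asc x m be \<otimes> asc y m be)"
    unfolding h_def ga using associator_mult_right_Z2 associator_comm_nucleus_right[OF z]
      associator_mult_left_Z2_right Z Z2_neutral_mult K z x y m by simp
  define T where "T = ((asc al x y \<otimes> asc be y x) \<otimes> asc be x m) \<otimes> asc al y m"
  have T: "T \<in> Z2_neutral" unfolding T_def using Z x y m by (simp add: Z2_neutral_mult)
  have "((al \<otimes> be) \<otimes> T) \<otimes> (h \<otimes> W) = (al \<otimes> be) \<otimes> ((asc al x y \<otimes> asc x y al) \<otimes>
      ((asc be y x \<otimes> asc x y be) \<otimes> ((asc be x m \<otimes> asc x m be) \<otimes> ((asc al y m \<otimes> asc y m al) \<otimes>
      (asc x m al \<otimes> (asc y m be \<otimes> (asc x al m \<otimes> asc y be m)))))))"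
    unfolding T_def h W_def using K Z x y m by (simp add: Ng.m_ac)
  also have "\<dots> = (al \<otimes> be) \<otimes> (asc x al y \<otimes> (\<one> \<otimes> (asc x be m \<otimes> (asc y al m \<otimes>
      (asc x m al \<otimes> (asc y m be \<otimes> (asc x al m \<otimes> asc y be m)))))))"
    by (simp only: associator_Z2_mid_split[OF Z(1) x y] associator_Z2_reverse_inverse[OF Z(2) y x]
        associator_Z2_mid_split[OF Z(2) x m] associator_Z2_mid_split[OF Z(1) y m])
  also have "\<dots> = ga \<otimes> (h \<otimes> W)"
    unfolding rel[symmetric] X_def g using K Z x y m by (simp add: Ng.m_ac)
  finally show ?thesis
    using K T hW unfolding al_def be_def ga_def T_def by (simp add: Z2_neutral_mult)
qed

lemma associator_split:
  assumes x: "x \<in> carrier Q" and y: "y \<in> carrier Q" and z: "z \<in> carrier Q"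
  shows "asc x y z = asc x z y \<otimes> asc y x z"
proof -
  let ?R = "x \<otimes> (y \<otimes> z)"
  have R: "?R \<in> carrier Q" using x y z by simp
  have u: "asc x z y \<in> Z2_neutral" and v: "asc y x z \<in> Z2_neutral"
    using associator_Z2_neutral x y z by auto
  have "?R \<otimes> asc x y z = (y \<otimes> x) \<otimes> z" using associator_law[OF x y z] comm[OF x y] by simp
  also have "\<dots> = ((x \<otimes> z) \<otimes> y) \<otimes> asc y x z"
    using associator_law[OF y x z] comm[of y "x \<otimes> z"] x y z by simp
  also have "(x \<otimes> z) \<otimes> y = ?R \<otimes> asc x z y" using associator_law[OF x z y] comm[OF z y] by simp
  also have "(?R \<otimes> asc x z y) \<otimes> asc y x z = ?R \<otimes> (asc x z y \<otimes> asc y x z)"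
    using associator_mid_Z2_neutral[OF u _ R, of "asc y x z"] associator_eq_one_iff[of ?R] R u v by simp
  finally show ?thesis
    using l_cancel[of ?R "asc x y z" "asc x z y \<otimes> asc y x z"] u v x y z by simp
qed

lemma associator_mult_left_expansion:
  assumes a: "a \<in> carrier Q" and b: "b \<in> carrier Q" and c: "c \<in> carrier Q" and d: "d \<in> carrier Q"
  shows "asc (a \<otimes> b) c d =
      (((asc a c d \<otimes> asc b c d) \<otimes> asc (asc a c d) a b) \<otimes> asc (asc b c d) b a)
    \<otimes> (((asc (asc a c d) b c \<otimes> asc (asc b c d) a c) \<otimes> asc (asc a c d) b d) \<otimes> asc (asc b c d) a d)"
proof -
  obtain f where f: "f \<in> inn Q" and fv: "\<And>u. u \<in> carrier Q \<Longrightarrow> f u = ldiv (d \<otimes> c) (d \<otimes> (c \<otimes> u))"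
    using left_inner_map_inn[OF d c] by blast
  have defect: "(c \<otimes> d) \<otimes> f w = ((c \<otimes> d) \<otimes> w) \<otimes> asc w c d" if w: "w \<in> carrier Q" for w
  proof -
    have "(c \<otimes> d) \<otimes> f w = d \<otimes> (c \<otimes> w)" using fv[OF w] comm[OF c d] c d w by simp
    also have "\<dots> = (w \<otimes> c) \<otimes> d" using comm[of d "c \<otimes> w"] comm[OF c w] c d w by simp
    also have "\<dots> = (w \<otimes> (c \<otimes> d)) \<otimes> asc w c d" using associator_law[OF w c d] by simp
    also have "w \<otimes> (c \<otimes> d) = (c \<otimes> d) \<otimes> w" using comm[of w "c \<otimes> d"] c d w by simp
    finally show ?thesis .
  qed
  have AZ: "asc a c d \<in> Z2" "asc b c d \<in> Z2" using associator_Z2 a b c d by auto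
  have "asc (a \<otimes> b) c d = (asc a c d \<otimes> asc b c d) \<otimes> (((asc (asc a c d) a b \<otimes> asc (asc b c d) b a)
      \<otimes> asc (asc b c d) a (c \<otimes> d)) \<otimes> asc (asc a c d) b (c \<otimes> d))"
    by (rule defect_mult_expansion[OF f _ _ defect a b]) (use associator_Z2_neutral c d in auto)
  then show ?thesis
    using associator_mult_right_Z2_left[OF AZ(2) a c d] associator_mult_right_Z2_left[OF AZ(1) b c d]
      AZ a b c d associator_Z2_neutral by (simp add: Ng.m_ac)
qed

lemma associator_inv_left:
  assumes B: "B \<in> Z2_neutral" and p: "p \<in> carrier Q" and q: "q \<in> carrier Q"
  shows "asc (Z2_neutral_inv B) p q = Z2_neutral_inv (asc B p q)"
proof -
  have "asc (Z2_neutral_inv B) p q \<otimes> asc B p q = asc (Z2_neutral_inv B \<otimes> B) p q"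
    using associator_mult_left_Z2[of "Z2_neutral_inv B" B p q] B p q by simp
  also have "\<dots> = \<one>" using associator_comm_nucleus_left[OF one_comm_nucleus p q] B by simp
  finally show ?thesis using Ng.inv_equality B p q by simp
qed

lemma associator_mult_right_expansion:
  assumes a: "a \<in> carrier Q" and b: "b \<in> carrier Q" and c: "c \<in> carrier Q" and d: "d \<in> carrier Q"
  shows "asc a b (c \<otimes> d) =
      (((asc a b c \<otimes> asc a b d) \<otimes> asc (asc a b c) c d) \<otimes> asc (asc a b d) d c)
    \<otimes> (((asc (asc a b c) d b \<otimes> asc (asc a b d) c b) \<otimes> asc (asc a b c) d a) \<otimes> asc (asc a b d) c a)"
proof -
  obtain f where f: "f \<in> inn Q" and fv: "\<And>u. u \<in> carrier Q \<Longrightarrow> f u = ldiv (a \<otimes> b) (a \<otimes> (b \<otimes> u))"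
    using left_inner_map_inn[OF a b] by blast
  have defect: "(a \<otimes> b) \<otimes> f w = ((a \<otimes> b) \<otimes> w) \<otimes> Z2_neutral_inv (asc a b w)" if w: "w \<in> carrier Q" for w
  proof -
    let ?R = "a \<otimes> (b \<otimes> w)" and ?B = "asc a b w"
    have B: "?B \<in> Z2_neutral" using associator_Z2_neutral a b w by simp
    have "(a \<otimes> b) \<otimes> f w = ?R \<otimes> (?B \<otimes> Z2_neutral_inv ?B)" using fv[OF w] B a b w by simp
    also have "\<dots> = (?R \<otimes> ?B) \<otimes> Z2_neutral_inv ?B"
      using associator_mid_Z2_neutral[OF B, of "Z2_neutral_inv ?B" ?R]
        associator_eq_one_iff[of ?R ?B "Z2_neutral_inv ?B"] B a b w by simp
    also have "?R \<otimes> ?B = (a \<otimes> b) \<otimes> w" using associator_law[OF a b w] .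
    finally show ?thesis .
  qed
  have AK: "asc a b c \<in> Z2_neutral" "asc a b d \<in> Z2_neutral" "asc a b (c \<otimes> d) \<in> Z2_neutral"
    using associator_Z2_neutral a b c d by auto
  then have AZ: "asc a b c \<in> Z2" "asc a b d \<in> Z2" by auto
  have "Z2_neutral_inv (asc a b (c \<otimes> d)) =
      (Z2_neutral_inv (asc a b c) \<otimes> Z2_neutral_inv (asc a b d)) \<otimes>
      (((asc (Z2_neutral_inv (asc a b c)) c d \<otimes> asc (Z2_neutral_inv (asc a b d)) d c)
      \<otimes> asc (Z2_neutral_inv (asc a b d)) c (a \<otimes> b)) \<otimes> asc (Z2_neutral_inv (asc a b c)) d (a \<otimes> b))"
    by (rule defect_mult_expansion[OF f _ _ defect c d]) (use associator_Z2_neutral a b in auto)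
  also have "\<dots> = Z2_neutral_inv ((asc a b c \<otimes> asc a b d) \<otimes>
      (((asc (asc a b c) c d \<otimes> asc (asc a b d) d c) \<otimes> (asc (asc a b d) c a \<otimes> asc (asc a b d) c b))
      \<otimes> (asc (asc a b c) d a \<otimes> asc (asc a b c) d b)))" (is "_ = Z2_neutral_inv ?rhs")
    using associator_inv_left associator_mult_right_Z2_left[OF AZ(2) c a b]
      associator_mult_right_Z2_left[OF AZ(1) d a b] AK a b c d by (simp add: Ng.inv_mult)
  finally have inv_eq: "Z2_neutral_inv (asc a b (c \<otimes> d)) = Z2_neutral_inv (?rhs)" .
  moreover have "?rhs \<in> Z2_neutral" using AK AZ a b c d by (simp add: Z2_neutral_mult)
  ultimately have "asc a b (c \<otimes> d) = ?rhs" by (rule inj_onD[OF Ng.inv_inj _ AK(3)])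
  then show ?thesis using AK AZ a b c d by (simp add: Ng.m_ac)
qed

lemma associator_mult_mid_expansion:
  assumes a: "a \<in> carrier Q" and b: "b \<in> carrier Q" and c: "c \<in> carrier Q" and d: "d \<in> carrier Q"
  shows "asc a (b \<otimes> c) d =
      (((asc a b d \<otimes> asc a c d) \<otimes> asc (asc a b d) b c) \<otimes> asc (asc a c d) c b)
    \<otimes> (((asc (asc a b d) c a \<otimes> asc (asc a c d) b a) \<otimes> asc (asc a b d) c d) \<otimes> asc (asc a c d) b d)"
proof -
  have K: "asc a d b \<in> Z2_neutral" "asc b a d \<in> Z2_neutral" "asc a d c \<in> Z2_neutral" "asc c a d \<in> Z2_neutral"
    using associator_Z2_neutral a b c d by auto
  then have Z: "asc a d b \<in> Z2" "asc b a d \<in> Z2" "asc a d c \<in> Z2" "asc c a d \<in> Z2" by auto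
  have "asc a (b \<otimes> c) d = asc a d (b \<otimes> c) \<otimes> asc (b \<otimes> c) a d" using associator_split[of a "b \<otimes> c" d] a b c d by simp
  also note associator_mult_right_expansion[OF a d b c]
  also note associator_mult_left_expansion[OF b c a d]
  finally show ?thesis
    unfolding associator_split[OF a b d] associator_split[OF a c d]
    using associator_mult_left_Z2[OF Z(1,2) b c] associator_mult_left_Z2[OF Z(3,4) c b]
      associator_mult_left_Z2[OF Z(1,2) c a] associator_mult_left_Z2[OF Z(3,4) b a]
      associator_mult_left_Z2[OF Z(1,2) c d] associator_mult_left_Z2[OF Z(3,4) b d] K Z a b c d
    by (simp add: Ng.m_ac)
qed

end

lemma comm_aut_loop3I:
  assumes "commutative_loop Q" and "automorphic_loop Q" and "nilpotency_class Q 3"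
  shows "comm_aut_loop3 Q"
  using assms
  unfolding comm_aut_loop3_def comm_aut_loop3_axioms_def loop_struct_def commutative_loop_def
    automorphic_loop_def nilpotency_class_def
  by blast

theorem proposition2p8:
  fixes Q :: "('a, 'b) monoid_scheme"
  assumes "commutative_loop Q"
    and "automorphic_loop Q"
    and "nilpotency_class Q 3"
    and "a \<in> carrier Q" and "b \<in> carrier Q" and "c \<in> carrier Q" and "d \<in> carrier Q"
  shows
   "(associator Q (a \<otimes>\<^bsub>Q\<^esub> b) c d =
      (((associator Q a c d \<otimes>\<^bsub>Q\<^esub> associator Q b c d)
         \<otimes>\<^bsub>Q\<^esub> associator Q (associator Q a c d) a b)
         \<otimes>\<^bsub>Q\<^esub> associator Q (associator Q b c d) b a)
    \<otimes>\<^bsub>Q\<^esub>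
      (((associator Q (associator Q a c d) b c \<otimes>\<^bsub>Q\<^esub> associator Q (associator Q b c d) a c)
         \<otimes>\<^bsub>Q\<^esub> associator Q (associator Q a c d) b d)
         \<otimes>\<^bsub>Q\<^esub> associator Q (associator Q b c d) a d)) \<and>
   (associator Q a b (c \<otimes>\<^bsub>Q\<^esub> d) =
      (((associator Q a b c \<otimes>\<^bsub>Q\<^esub> associator Q a b d)
         \<otimes>\<^bsub>Q\<^esub> associator Q (associator Q a b c) c d)
         \<otimes>\<^bsub>Q\<^esub> associator Q (associator Q a b d) d c)
    \<otimes>\<^bsub>Q\<^esub>
      (((associator Q (associator Q a b c) d b \<otimes>\<^bsub>Q\<^esub> associator Q (associator Q a b d) c b)
         \<otimes>\<^bsub>Q\<^esub> associator Q (associator Q a b c) d a)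
         \<otimes>\<^bsub>Q\<^esub> associator Q (associator Q a b d) c a)) \<and>
   (associator Q a (b \<otimes>\<^bsub>Q\<^esub> c) d =
      (((associator Q a b d \<otimes>\<^bsub>Q\<^esub> associator Q a c d)
         \<otimes>\<^bsub>Q\<^esub> associator Q (associator Q a b d) b c)
         \<otimes>\<^bsub>Q\<^esub> associator Q (associator Q a c d) c b)
    \<otimes>\<^bsub>Q\<^esub>
      (((associator Q (associator Q a b d) c a \<otimes>\<^bsub>Q\<^esub> associator Q (associator Q a c d) b a)
         \<otimes>\<^bsub>Q\<^esub> associator Q (associator Q a b d) c d)
         \<otimes>\<^bsub>Q\<^esub> associator Q (associator Q a c d) b d))"
proof -
  interpret comm_aut_loop3 Q using assms(1-3) by (rule comm_aut_loop3I)
  show ?thesis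
    using associator_mult_left_expansion[OF assms(4-7)] associator_mult_right_expansion[OF assms(4-7)]
      associator_mult_mid_expansion[OF assms(4-7)] by blast
qed

end
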